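(* Let $(\Sigma,\mathscr{P})$ be a Kelvin-Planck theory with set of hotness levels $\mathscr{H}$, and let $T$ be a Clausius-Duhem temperature scale on $\Sigma$. The following are equivalent: (i) every Clausius-Duhem temperature scale on $\Sigma$ is a positive multiple of $T$; (ii) for every $\mathscr{q}\in\mathscr{M}(\Sigma)$ with $\int_\Sigma\frac{d\mathscr{q}}{T}=0$, $(0,\mathscr{q})\in\hat{\mathscr{P}}$; (iii) for each pair of hotness levels $h',h\in\mathscr{H}$ there is a Carnot element of $(\Sigma,\mathscr{P})$ operating between $h'$ and $h$; (iv) for each pair of states $\sigma',\sigma\in\Sigma$ there is a Carnot element of $(\Sigma,\mathscr{P})$ of the form $(0,\mathscr{q})$ with $\mathscr{q}=c'\delta_{\sigma'}-c\,\delta_\sigma$, $c',c>0$, and $c'/c=T(\sigma')/T(\sigma)$.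
   Context: $\Sigma$ is a compact Hausdorff space. $\mathscr{M}(\Sigma)$ is the vector space of regular signed Borel measures on $\Sigma$ with its weak-star topology; $\mathscr{M}_+(\Sigma)$ the nonnegative members; $\mathscr{M}^\circ(\Sigma)=\{\mu:\mu(\Sigma)=0\}$; $\mathscr{V}(\Sigma)=\mathscr{M}^\circ(\Sigma)\oplus\mathscr{M}(\Sigma)$ with the product topology. For $\mathscr{P}\subset\mathscr{V}(\Sigma)$, $\hat{\mathscr{P}}$ is the closure of the set of nonnegative multiples of members of $\mathscr{P}$. A thermodynamical theory is $(\Sigma,\mathscr{P})$ with $\hat{\mathscr{P}}$ convex; it is Kelvin-Planck if $\hat{\mathscr{P}}\cap\{(0,\nu):\nu\in\mathscr{M}_+(\Sigma)\}=\{(0,0)\}$. A Clausius-Duhem pair is $(\eta,T)$, $\eta\in C(\Sigma,\mathbb{R})$, $T\in C(\Sigma,(0,\infty))$, with $\int_\Sigma\eta\,d(\Delta\mathscr{m})\ge\int_\Sigma\frac{d\mathscr{q}}{T}$ for all $(\Delta\mathscr{m},\mathscr{q})\in\mathscr{P}$; $T$ is then a Clausius-Duhem temperature scale. States $\sigma,\sigma'$ are of the same hotness if both $(0,\delta_\sigma-\delta_{\sigma'})$ and $(0,\delta_{\sigma'}-\delta_\sigma)$ lie in $\hat{\mathscr{P}}$; the equivalence classes are the hotness levels. A reversible element is a member of $\hat{\mathscr{P}}$ whose negative also lies in $\hat{\mathscr{P}}$; a cyclic element is a member of $\hat{\mathscr{P}}$ of the form $(0,\mathscr{q})$. A Carnot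 element operating between hotness levels $h'$ and $h$ is a reversible cyclic element $(0,\mathscr{q})$ with $\mathscr{q}=\mu'-\mu$, where $\mu',\mu$ are nonzero members of $\mathscr{M}_+(\Sigma)$ with $\mathrm{supp}\,\mu'\subset h'$ and $\mathrm{supp}\,\mu\subset h$. *)

theory Defs
  imports "HOL-Analysis.Analysis"
begin

text \<open>Regular signed Borel measures on a compact Hausdorff space \<Sigma> (a type 'a with
  UNIV compact) are represented via the Riesz representation theorem as bounded linear
  functionals on C(\<Sigma>), i.e. maps ('a \<Rightarrow> real) \<Rightarrow> real which are linear and bounded on
  continuous functions and (for extensionality) vanish on non-continuous arguments.
  The value of such a functional at f is the integral of f.\<close>

type_synonym 'a meas = "('a \<Rightarrow> real) \<Rightarrow> real"

definition cfuns :: "('a::topological_space \<Rightarrow> real) set" where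
  "cfuns = {f. continuous_on UNIV f}"

definition meas :: "'a::topological_space meas set" where
  "meas = {\<mu>. (\<forall>f\<in>cfuns. \<forall>g\<in>cfuns. \<mu> (\<lambda>x. f x + g x) = \<mu> f + \<mu> g)
              \<and> (\<forall>f\<in>cfuns. \<forall>c. \<mu> (\<lambda>x. c * f x) = c * \<mu> f)
              \<and> (\<exists>K. \<forall>f\<in>cfuns. \<bar>\<mu> f\<bar> \<le> K * (SUP x. \<bar>f x\<bar>))
              \<and> (\<forall>f. f \<notin> cfuns \<longrightarrow> \<mu> f = 0)}"

definition meas_plus :: "'a::topological_space meas set" where
  "meas_plus = {\<mu> \<in> meas. \<forall>f\<in>cfuns. (\<forall>x. 0 \<le> f x) \<longrightarrow> 0 \<le> \<mu> f}"

definition meas_zero_total :: "'a::topological_space meas set" where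
  "meas_zero_total = {\<mu> \<in> meas. \<mu> (\<lambda>_. 1) = 0}"

definition Vsp :: "('a::topological_space meas \<times> 'a meas) set" where
  "Vsp = meas_zero_total \<times> meas"

definition mzero :: "'a meas" where "mzero = (\<lambda>f. 0)"

definition dirac :: "'a::topological_space \<Rightarrow> 'a meas" where
  "dirac \<sigma> = (\<lambda>f. if f \<in> cfuns then f \<sigma> else 0)"

definition mscale :: "real \<Rightarrow> 'a meas \<Rightarrow> 'a meas" where
  "mscale c \<mu> = (\<lambda>f. c * \<mu> f)"

definition mdiff :: "'a meas \<Rightarrow> 'a meas \<Rightarrow> 'a meas" where
  "mdiff \<mu> \<nu> = (\<lambda>f. \<mu> f - \<nu> f)"

definition madd :: "'a meas \<Rightarrow> 'a meas \<Rightarrow> 'a meas" where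
  "madd \<mu> \<nu> = (\<lambda>f. \<mu> f + \<nu> f)"

definition pscale :: "real \<Rightarrow> ('a meas \<times> 'a meas) \<Rightarrow> ('a meas \<times> 'a meas)" where
  "pscale c u = (mscale c (fst u), mscale c (snd u))"

definition padd :: "('a meas \<times> 'a meas) \<Rightarrow> ('a meas \<times> 'a meas) \<Rightarrow> ('a meas \<times> 'a meas)" where
  "padd u v = (madd (fst u) (fst v), madd (snd u) (snd v))"

definition msupport :: "'a::topological_space meas \<Rightarrow> 'a set" where
  "msupport \<mu> = {x. \<forall>U. open U \<and> x \<in> U \<longrightarrow>
      (\<exists>f\<in>cfuns. (\<forall>y. y \<notin> U \<longrightarrow> f y = 0) \<and> \<mu> f \<noteq> 0)}"

text \<open>Closure in V(\<Sigma>) with the product of the weak-star topologies (basic neighbourhoods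
  given by finitely many continuous test functions).\<close>
definition wclosure :: "('a::topological_space meas \<times> 'a meas) set \<Rightarrow> ('a meas \<times> 'a meas) set" where
  "wclosure A = {u \<in> Vsp. \<forall>F. finite F \<and> F \<subseteq> cfuns \<longrightarrow> (\<forall>e>0. \<exists>v\<in>A.
       \<forall>f\<in>F. \<bar>fst u f - fst v f\<bar> < e \<and> \<bar>snd u f - snd v f\<bar> < e)}"

definition hatP :: "('a::topological_space meas \<times> 'a meas) set \<Rightarrow> ('a meas \<times> 'a meas) set" where
  "hatP P = wclosure {pscale c u | c u. c \<ge> 0 \<and> u \<in> P}"

definition thermo_theory :: "('a::topological_space meas \<times> 'a meas) set \<Rightarrow> bool" where
  "thermo_theory P \<longleftrightarrow> P \<subseteq> Vsp \<and>
     (\<forall>u\<in>hatP P. \<forall>v\<in>hatP P. \<forall>t::real. 0 \<le> t \<and> t \<le> 1 \<longrightarrow> padd (pscale t u) (pscale (1 - t) v) \<in> hatP P)"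

definition kelvin_planck :: "('a::topological_space meas \<times> 'a meas) set \<Rightarrow> bool" where
  "kelvin_planck P \<longleftrightarrow> thermo_theory P \<and>
     hatP P \<inter> {(mzero, \<nu>) | \<nu>. \<nu> \<in> meas_plus} = {(mzero, mzero)}"

definition CD_pair :: "('a::topological_space meas \<times> 'a meas) set \<Rightarrow> ('a \<Rightarrow> real) \<Rightarrow> ('a \<Rightarrow> real) \<Rightarrow> bool" where
  "CD_pair P \<eta> T \<longleftrightarrow> \<eta> \<in> cfuns \<and> T \<in> cfuns \<and> (\<forall>x. 0 < T x) \<and>
     (\<forall>(dm, q)\<in>P. dm \<eta> \<ge> q (\<lambda>x. 1 / T x))"

definition CD_temp :: "('a::topological_space meas \<times> 'a meas) set \<Rightarrow> ('a \<Rightarrow> real) \<Rightarrow> bool" where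
  "CD_temp P T \<longleftrightarrow> (\<exists>\<eta>. CD_pair P \<eta> T)"

definition same_hotness :: "('a::topological_space meas \<times> 'a meas) set \<Rightarrow> 'a \<Rightarrow> 'a \<Rightarrow> bool" where
  "same_hotness P \<sigma> \<sigma>' \<longleftrightarrow> (mzero, mdiff (dirac \<sigma>) (dirac \<sigma>')) \<in> hatP P
                            \<and> (mzero, mdiff (dirac \<sigma>') (dirac \<sigma>)) \<in> hatP P"

definition hotness_levels :: "('a::topological_space meas \<times> 'a meas) set \<Rightarrow> 'a set set" where
  "hotness_levels P = {{\<sigma>'. same_hotness P \<sigma> \<sigma>'} | \<sigma>. True}"

definition reversible :: "('a::topological_space meas \<times> 'a meas) set \<Rightarrow> ('a meas \<times> 'a meas) \<Rightarrow> bool" where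
  "reversible P u \<longleftrightarrow> u \<in> hatP P \<and> pscale (-1) u \<in> hatP P"

definition cyclic :: "('a::topological_space meas \<times> 'a meas) set \<Rightarrow> ('a meas \<times> 'a meas) \<Rightarrow> bool" where
  "cyclic P u \<longleftrightarrow> u \<in> hatP P \<and> fst u = mzero"

definition carnot_between :: "('a::topological_space meas \<times> 'a meas) set \<Rightarrow> 'a set \<Rightarrow> 'a set \<Rightarrow> ('a meas \<times> 'a meas) \<Rightarrow> bool" where
  "carnot_between P h' h u \<longleftrightarrow> reversible P u \<and> cyclic P u \<and>
     (\<exists>\<mu>' \<mu>. \<mu>' \<in> meas_plus \<and> \<mu> \<in> meas_plus \<and> \<mu>' \<noteq> mzero \<and> \<mu> \<noteq> mzero \<and>
        msupport \<mu>' \<subseteq> h' \<and> msupport \<mu> \<subseteq> h \<and> snd u = mdiff \<mu>' \<mu>)"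

definition carnot :: "('a::topological_space meas \<times> 'a meas) set \<Rightarrow> ('a meas \<times> 'a meas) \<Rightarrow> bool" where
  "carnot P u \<longleftrightarrow> (\<exists>h'\<in>hotness_levels P. \<exists>h\<in>hotness_levels P. carnot_between P h' h u)"

end

(* Every reversible cycle (0, q) has zero entropy exchange, q(1/T) = 0, by the Clausius-Duhem
   inequality applied to (0, q) and (0, -q).  The four conditions all say that, conversely, there
   are enough reversible cycles, and the bridge between them is duality for the weak-star topology:
   a pair lies in the closed convex cone hatP as soon as it satisfies every continuous linear
   inequality valid on a subcone of hatP.  A weak-star neighbourhood involves only finitely many test
   functions, so the separating inequality is found by separating a point from a convex cone in R^n.

   (i) => (ii): an inequality (G1, G2) valid on hatP tilts the Clausius-Duhem pair (eta, T) into
   (eta + t G1, 1 / (1/T - t G2)) for small t > 0; uniqueness of T up to scaling forces G2 to be a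
   multiple of 1/T, so q G2 = 0 whenever q(1/T) = 0.
   (iii) => (iv): if mu >= 0 lives on the hotness level of sigma, then mu - mu(1) delta_sigma is a
   reversible cycle, because every function annihilating the reversible cycles is constant on that
   level; this collapses both reservoirs of a Carnot element to single states, and the ratio of
   the two weights is then fixed by zero entropy exchange.
   (ii) => (iii) and (iv) => (ii) use the cycles T(x) delta_x - T(y) delta_y, whose annihilator
   consists of the multiples of 1/T.

   Beyond P being a thermodynamical theory, the Kelvin-Planck hypothesis is used only through its
   consequence (0, 0) in hatP. *)

theory Submission
  imports Defs
begin

lemma cfuns_linear: "f \<in> cfuns \<Longrightarrow> g \<in> cfuns \<Longrightarrow> (\<lambda>x. a * f x + b * g x) \<in> cfuns"
  by (auto simp: cfuns_def intro!: continuous_intros)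

lemma cfuns_const [simp]: "(\<lambda>x. c) \<in> cfuns"
  by (simp add: cfuns_def)

lemma cfuns_sum: "(\<And>x. x \<in> X \<Longrightarrow> \<phi> x \<in> cfuns) \<Longrightarrow> (\<lambda>y. \<Sum>x\<in>X. \<phi> x y) \<in> cfuns"
  by (auto simp: cfuns_def intro!: continuous_intros)

lemma cfuns_inverse: "T \<in> cfuns \<Longrightarrow> (\<And>x. 0 < T x) \<Longrightarrow> (\<lambda>x. 1 / T x) \<in> cfuns"
  unfolding cfuns_def by (auto intro!: continuous_intros simp: less_imp_neq[symmetric])

lemma cfuns_bdd_above_abs:
  assumes "compact (UNIV :: 'a::topological_space set)" and "(f :: 'a \<Rightarrow> real) \<in> cfuns"
  shows "bdd_above (range (\<lambda>x. \<bar>f x\<bar>))"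
proof -
  have "continuous_on UNIV (\<lambda>x. \<bar>f x\<bar>)"
    using assms(2) by (auto simp: cfuns_def intro!: continuous_intros)
  then have "compact (range (\<lambda>x. \<bar>f x\<bar>))"
    using assms(1) compact_continuous_image by blast
  then show ?thesis by (simp add: bounded_imp_bdd_above compact_imp_bounded)
qed

lemma cfuns_bounded:
  assumes "compact (UNIV :: 'a::topological_space set)" and "(f :: 'a \<Rightarrow> real) \<in> cfuns"
  obtains B where "\<And>x. \<bar>f x\<bar> \<le> B"
  using cfuns_bdd_above_abs[OF assms] by (auto simp: bdd_above_def)

lemma meas_linear:
  assumes "\<mu> \<in> meas" "f \<in> cfuns" "g \<in> cfuns" "\<And>x. h x = a * f x + b * g x"
  shows "\<mu> h = a * \<mu> f + b * \<mu> g"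
proof -
  have "(\<lambda>x. a * f x) \<in> cfuns" "(\<lambda>x. b * g x) \<in> cfuns"
    using assms(2,3) by (auto simp: cfuns_def intro!: continuous_intros)
  moreover have "h = (\<lambda>x. a * f x + b * g x)" using assms(4) by auto
  ultimately show ?thesis using assms(1-3) unfolding meas_def by simp
qed

lemma meas_scale:
  assumes "\<mu> \<in> meas" "f \<in> cfuns" "\<And>x. h x = a * f x"
  shows "\<mu> h = a * \<mu> f"
  using meas_linear[OF assms(1,2,2), of h a 0] assms(3) by simp

lemma meas_zero_fun: "\<mu> \<in> meas \<Longrightarrow> \<mu> (\<lambda>x. 0) = 0"
  using meas_scale[of \<mu> "\<lambda>x. 0" "\<lambda>x. 0" 0] by simp

lemma meas_not_cfuns: "\<mu> \<in> meas \<Longrightarrow> f \<notin> cfuns \<Longrightarrow> \<mu> f = 0"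
  by (simp add: meas_def)

lemma meas_sum:
  assumes "\<mu> \<in> meas" "finite X" "\<And>x. x \<in> X \<Longrightarrow> \<phi> x \<in> cfuns"
  shows "\<mu> (\<lambda>y. \<Sum>x\<in>X. \<phi> x y) = (\<Sum>x\<in>X. \<mu> (\<phi> x))"
  using assms(2,3)
proof (induction X rule: finite_induct)
  case empty
  then show ?case using meas_zero_fun[OF assms(1)] by simp
next
  case (insert a X)
  then have "\<mu> (\<lambda>y. \<Sum>x\<in>insert a X. \<phi> x y) = 1 * \<mu> (\<phi> a) + 1 * \<mu> (\<lambda>y. \<Sum>x\<in>X. \<phi> x y)"
    by (intro meas_linear[OF assms(1)] cfuns_sum) auto
  with insert show ?case by simp
qed

lemma mzero_meas [simp]: "mzero \<in> meas"
  unfolding meas_def mzero_def by (auto intro!: exI[of _ 0])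

lemma madd_meas:
  fixes \<mu> :: "'a::topological_space meas"
  assumes "\<mu> \<in> meas" "\<nu> \<in> meas"
  shows "madd \<mu> \<nu> \<in> meas"
proof -
  obtain K1 K2 where "\<forall>f\<in>cfuns. \<bar>\<mu> f\<bar> \<le> K1 * (SUP x. \<bar>f x\<bar>)" "\<forall>f\<in>cfuns. \<bar>\<nu> f\<bar> \<le> K2 * (SUP x. \<bar>f x\<bar>)"
    using assms unfolding meas_def by blast
  then have "\<forall>f\<in>(cfuns :: ('a \<Rightarrow> real) set). \<bar>\<mu> f + \<nu> f\<bar> \<le> (K1 + K2) * (SUP x. \<bar>f x\<bar>)"
    by (smt (verit, del_insts) distrib_right)
  then have "\<exists>K. \<forall>f\<in>(cfuns :: ('a \<Rightarrow> real) set). \<bar>\<mu> f + \<nu> f\<bar> \<le> K * (SUP x. \<bar>f x\<bar>)" ..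
  with assms show ?thesis unfolding meas_def madd_def by (auto simp: distrib_left)
qed

lemma mscale_meas:
  fixes \<mu> :: "'a::topological_space meas"
  assumes "\<mu> \<in> meas"
  shows "mscale c \<mu> \<in> meas"
proof -
  obtain K where "\<forall>f\<in>cfuns. \<bar>\<mu> f\<bar> \<le> K * (SUP x. \<bar>f x\<bar>)"
    using assms unfolding meas_def by blast
  then have "\<forall>f\<in>(cfuns :: ('a \<Rightarrow> real) set). \<bar>c * \<mu> f\<bar> \<le> (\<bar>c\<bar> * K) * (SUP x. \<bar>f x\<bar>)"
    by (auto simp: abs_mult mult.assoc intro: mult_left_mono)
  then have "\<exists>K. \<forall>f\<in>(cfuns :: ('a \<Rightarrow> real) set). \<bar>c * \<mu> f\<bar> \<le> K * (SUP x. \<bar>f x\<bar>)" ..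
  with assms show ?thesis unfolding meas_def mscale_def by (auto simp: distrib_left mult.left_commute)
qed

lemma mdiff_meas:
  assumes "\<mu> \<in> meas" "\<nu> \<in> meas"
  shows "mdiff \<mu> \<nu> \<in> meas"
proof -
  have "mdiff \<mu> \<nu> = madd \<mu> (mscale (-1) \<nu>)" by (simp add: mdiff_def madd_def mscale_def)
  then show ?thesis by (simp add: assms madd_meas mscale_meas)
qed

lemma dirac_meas:
  assumes "compact (UNIV :: 'a::topological_space set)"
  shows "dirac (\<sigma> :: 'a) \<in> meas"
proof -
  have "\<forall>f\<in>cfuns. \<bar>dirac \<sigma> f\<bar> \<le> 1 * (SUP x. \<bar>f x\<bar>)"
    using cfuns_bdd_above_abs[OF assms] by (auto simp: dirac_def intro: cSUP_upper)
  then have "\<exists>K. \<forall>f\<in>cfuns. \<bar>dirac \<sigma> f\<bar> \<le> K * (SUP x. \<bar>f x\<bar>)" ..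
  then show ?thesis unfolding meas_def by (auto simp: dirac_def cfuns_def intro!: continuous_intros)
qed

lemma meas_plus_mono:
  assumes "\<mu> \<in> meas_plus" "f \<in> cfuns" "g \<in> cfuns" "\<And>x. f x \<le> g x"
  shows "\<mu> f \<le> \<mu> g"
proof -
  have m: "\<mu> \<in> meas" using assms(1) by (simp add: meas_plus_def)
  have "0 \<le> \<mu> (\<lambda>x. 1 * g x + (-1) * f x)"
    using assms cfuns_linear[OF assms(3,2), of 1 "-1"] by (auto simp: meas_plus_def)
  also have "\<dots> = 1 * \<mu> g + (-1) * \<mu> f" by (rule meas_linear[OF m assms(3,2)]) simp
  finally show ?thesis by simp
qed

lemma meas_plus_total_pos:
  fixes \<mu> :: "'a::topological_space meas"
  assumes cpt: "compact (UNIV :: 'a set)" and \<mu>: "\<mu> \<in> meas_plus" "\<mu> \<noteq> mzero"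
  shows "0 < \<mu> (\<lambda>_. 1)"
proof (rule ccontr)
  have m: "\<mu> \<in> meas" using \<mu> by (simp add: meas_plus_def)
  assume "\<not> 0 < \<mu> (\<lambda>_. 1)"
  moreover have "0 \<le> \<mu> (\<lambda>_. 1)" using \<mu> by (simp add: meas_plus_def)
  ultimately have total: "\<mu> (\<lambda>_. c) = 0" for c
    using meas_scale[OF m cfuns_const[of 1], of "\<lambda>_. c" c] by simp
  have "\<mu> f = 0" for f
  proof (cases "f \<in> cfuns")
    case True
    then obtain B where B: "\<And>x. \<bar>f x\<bar> \<le> B" using cfuns_bounded[OF cpt] by blast
    have "f x \<le> B" "-B \<le> f x" for x using B[of x] by auto
    then have "\<mu> f \<le> \<mu> (\<lambda>_. B)" "\<mu> (\<lambda>_. -B) \<le> \<mu> f"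
      using meas_plus_mono[OF \<mu>(1)] True by auto
    then show ?thesis using total by simp
  qed (simp add: meas_not_cfuns[OF m])
  then show False using \<mu>(2) by (auto simp: mzero_def)
qed

lemma mscale_dirac_meas_plus:
  assumes "compact (UNIV :: 'a::topological_space set)" and "0 < c"
  shows "mscale c (dirac (\<sigma> :: 'a)) \<in> meas_plus" "mscale c (dirac \<sigma>) \<noteq> mzero"
proof -
  show "mscale c (dirac \<sigma>) \<in> meas_plus"
    using mscale_meas[OF dirac_meas[OF assms(1)]] assms(2)
    by (auto simp: meas_plus_def mscale_def dirac_def)
  have "mscale c (dirac \<sigma>) (\<lambda>_. 1) = c" by (simp add: mscale_def dirac_def)
  then show "mscale c (dirac \<sigma>) \<noteq> mzero" using assms(2) by (auto simp: mzero_def)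
qed

lemma msupport_mscale_dirac: "msupport (mscale c (dirac (\<sigma> :: 'a::t2_space))) \<subseteq> {\<sigma>}"
proof
  fix x assume x: "x \<in> msupport (mscale c (dirac \<sigma>))"
  show "x \<in> {\<sigma>}"
  proof (rule ccontr)
    assume "x \<notin> {\<sigma>}"
    then obtain U V where UV: "open U" "open V" "x \<in> U" "\<sigma> \<in> V" "U \<inter> V = {}"
      using hausdorff[of x \<sigma>] by auto
    with x obtain f where "f \<in> cfuns" "\<forall>y. y \<notin> U \<longrightarrow> f y = 0" "mscale c (dirac \<sigma>) f \<noteq> 0"
      unfolding msupport_def by blast
    with UV show False by (auto simp: mscale_def dirac_def)
  qed
qed

lemma urysohn_bump:
  fixes x :: "'a::t2_space"
  assumes "compact (UNIV :: 'a set)" and "open U" "x \<in> U"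
  obtains \<psi> where "\<psi> \<in> cfuns" "\<And>y. 0 \<le> \<psi> y" "\<psi> x = 1" "\<And>y. y \<notin> U \<Longrightarrow> \<psi> y = 0"
proof -
  have "Hausdorff_space (euclidean :: 'a topology)"
    unfolding Hausdorff_space_def using hausdorff by (auto simp: disjnt_def)
  moreover have "compact_space (euclidean :: 'a topology)"
    using assms(1) by (simp add: compact_space_def)
  ultimately have normal: "normal_space (euclidean :: 'a topology)"
    using compact_Hausdorff_or_regular_imp_normal_space by blast
  obtain f where f: "continuous_map euclidean euclideanreal f" "f ` {x} \<subseteq> {1}" "f ` (- U) \<subseteq> {0}"
    using Urysohn_lemma_alt[OF normal, of "{x}" "- U" 1 0] assms(2,3) by (auto simp: disjnt_def)
  define \<psi> where "\<psi> y = max 0 (min 1 (f y))" for y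
  have "continuous_on UNIV f" using f(1) by simp
  then have "continuous_on UNIV \<psi>" unfolding \<psi>_def by (intro continuous_intros)
  then show ?thesis using f by (intro that[of \<psi>]) (auto simp: \<psi>_def cfuns_def)
qed

lemma meas_plus_vanishes_off_support:
  fixes \<mu> :: "'a::t2_space meas"
  assumes cpt: "compact (UNIV :: 'a set)" and \<mu>: "\<mu> \<in> meas_plus"
    and C: "closed C" "C \<inter> msupport \<mu> = {}"
    and H: "H \<in> cfuns" "\<And>x. 0 \<le> H x" "\<And>x. x \<notin> C \<Longrightarrow> H x = 0"
  shows "\<mu> H = 0"
proof -
  have m: "\<mu> \<in> meas" using \<mu> by (simp add: meas_plus_def)
  have "\<exists>\<psi>. \<psi> \<in> cfuns \<and> (\<forall>y. 0 \<le> \<psi> y) \<and> \<psi> x = 1 \<and> \<mu> \<psi> = 0" if "x \<in> C" for x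
  proof -
    have "x \<notin> msupport \<mu>" using that C(2) by blast
    then obtain U where U: "open U" "x \<in> U"
      and null: "\<And>f. f \<in> cfuns \<Longrightarrow> \<forall>y. y \<notin> U \<longrightarrow> f y = 0 \<Longrightarrow> \<mu> f = 0"
      unfolding msupport_def by blast
    obtain \<psi> where \<psi>: "\<psi> \<in> cfuns" "\<And>y. 0 \<le> \<psi> y" "\<psi> x = 1" "\<And>y. y \<notin> U \<Longrightarrow> \<psi> y = 0"
      using urysohn_bump[OF cpt U] by blast
    have "\<mu> \<psi> = 0" by (rule null) (use \<psi> in auto)
    with \<psi> show ?thesis by blast
  qed
  then have "\<forall>x\<in>C. \<exists>\<psi>. \<psi> \<in> cfuns \<and> (\<forall>y. 0 \<le> \<psi> y) \<and> \<psi> x = 1 \<and> \<mu> \<psi> = 0" by blast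
  from bchoice[OF this] obtain \<psi>
    where "\<forall>x\<in>C. \<psi> x \<in> cfuns \<and> (\<forall>y. 0 \<le> \<psi> x y) \<and> \<psi> x x = 1 \<and> \<mu> (\<psi> x) = 0"
    by blast
  then have \<psi>: "\<And>x. x \<in> C \<Longrightarrow> \<psi> x \<in> cfuns" "\<And>x y. x \<in> C \<Longrightarrow> 0 \<le> \<psi> x y"
    "\<And>x. x \<in> C \<Longrightarrow> \<psi> x x = 1" "\<And>x. x \<in> C \<Longrightarrow> \<mu> (\<psi> x) = 0"
    by auto
  have "compact C" using compact_Int_closed[OF cpt C(1)] by simp
  moreover have "open {y. 1/2 < \<psi> x y}" if "x \<in> C" for x
    using \<psi>(1)[OF that] by (intro open_Collect_less continuous_intros) (auto simp: cfuns_def)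
  moreover have "C \<subseteq> (\<Union>x\<in>C. {y. 1/2 < \<psi> x y})"
  proof
    fix x assume "x \<in> C"
    then show "x \<in> (\<Union>x\<in>C. {y. 1/2 < \<psi> x y})" using \<psi>(3)[of x] by (intro UN_I[of x]) auto
  qed
  ultimately obtain X where X: "X \<subseteq> C" "finite X" "C \<subseteq> (\<Union>x\<in>X. {y. 1/2 < \<psi> x y})"
    by (rule compactE_image)
  define \<Psi> where "\<Psi> y = (\<Sum>x\<in>X. \<psi> x y)" for y
  have \<psi>X: "\<And>x. x \<in> X \<Longrightarrow> \<psi> x \<in> cfuns" using X(1) \<psi>(1) by blast
  have \<Psi>_cfuns: "\<Psi> \<in> cfuns" unfolding \<Psi>_def by (rule cfuns_sum[OF \<psi>X])
  have "\<mu> \<Psi> = (\<Sum>x\<in>X. \<mu> (\<psi> x))" unfolding \<Psi>_def by (rule meas_sum[OF m X(2) \<psi>X])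
  also have "\<dots> = 0" using X(1) \<psi>(4) by (intro sum.neutral) blast
  finally have \<Psi>: "\<Psi> \<in> cfuns" "\<mu> \<Psi> = 0" using \<Psi>_cfuns by blast+
  have \<Psi>_pos: "0 \<le> \<Psi> y" for y using X(1) \<psi>(2) unfolding \<Psi>_def by (auto intro: sum_nonneg)
  obtain B where B: "\<And>x. \<bar>H x\<bar> \<le> B" using cfuns_bounded[OF cpt H(1)] by blast
  have "H y \<le> (2 * B) * \<Psi> y" for y
  proof (cases "y \<in> C")
    case True
    then obtain x where x: "x \<in> X" "1/2 < \<psi> x y" using X(3) by blast
    have "\<psi> x y \<le> \<Psi> y"
      unfolding \<Psi>_def using X \<psi>(2) x(1) by (intro member_le_sum) auto
    moreover have "0 \<le> B" using B[of y] by linarith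
    ultimately have "(2 * B) * (1/2) \<le> (2 * B) * \<Psi> y"
      using x by (intro mult_left_mono) auto
    then have "B \<le> (2 * B) * \<Psi> y" by simp
    then show ?thesis using B[of y] by linarith
  next
    case False
    then show ?thesis using H(3) B[of y] \<Psi>_pos[of y] by simp
  qed
  then have "\<mu> H \<le> \<mu> (\<lambda>y. (2 * B) * \<Psi> y)"
    using \<Psi>(1) by (intro meas_plus_mono[OF \<mu> H(1)]) (auto simp: cfuns_def intro!: continuous_intros)
  also have "\<dots> = 0" using meas_scale[OF m \<Psi>(1), of "\<lambda>y. (2 * B) * \<Psi> y" "2 * B"] \<Psi>(2) by simp
  finally have "\<mu> H \<le> 0" .
  moreover have "0 \<le> \<mu> H" using \<mu> H(1,2) unfolding meas_plus_def by blast
  ultimately show ?thesis by simp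
qed

lemma meas_plus_nonneg_on_support:
  fixes \<mu> :: "'a::t2_space meas"
  assumes cpt: "compact (UNIV :: 'a set)" and \<mu>: "\<mu> \<in> meas_plus" and G: "G \<in> cfuns"
    and nonneg: "\<And>x. x \<in> msupport \<mu> \<Longrightarrow> 0 \<le> G x"
  shows "0 \<le> \<mu> G"
proof -
  have m: "\<mu> \<in> meas" using \<mu> by (simp add: meas_plus_def)
  have total: "0 \<le> \<mu> (\<lambda>_. 1)" using \<mu> by (simp add: meas_plus_def)
  have main: "- \<epsilon> * \<mu> (\<lambda>_. 1) \<le> \<mu> G" if "0 < \<epsilon>" for \<epsilon>
  proof -
    \<comment> \<open>\<open>H\<close> is the negative part of \<open>G + \<epsilon>\<close>; it lives on the closed set \<open>G \<le> -\<epsilon>\<close>,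
      which misses the support.\<close>
    define H where "H x = max 0 (- G x - \<epsilon>)" for x
    have H: "H \<in> cfuns" using G unfolding H_def cfuns_def by (auto intro!: continuous_intros)
    have "closed {x. \<epsilon> \<le> - G x}"
      using G by (intro closed_Collect_le continuous_intros) (auto simp: cfuns_def)
    moreover have "\<not> \<epsilon> \<le> - G x" if "x \<in> msupport \<mu>" for x
      using nonneg[OF that] \<open>0 < \<epsilon>\<close> by linarith
    then have "{x. \<epsilon> \<le> - G x} \<inter> msupport \<mu> = {}" by blast
    ultimately have "\<mu> H = 0"
      by (rule meas_plus_vanishes_off_support[OF cpt \<mu> _ _ H]) (auto simp: H_def)
    have H\<epsilon>: "(\<lambda>x. 1 * H x + \<epsilon> * 1) \<in> cfuns" by (rule cfuns_linear[OF H cfuns_const])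
    have "(\<lambda>x. 1 * G x + 1 * (1 * H x + \<epsilon> * 1)) \<in> cfuns" by (rule cfuns_linear[OF G H\<epsilon>])
    then have "0 \<le> \<mu> (\<lambda>x. 1 * G x + 1 * (1 * H x + \<epsilon> * 1))"
      using \<mu> unfolding meas_plus_def H_def by auto
    also have "\<dots> = 1 * \<mu> G + 1 * \<mu> (\<lambda>x. 1 * H x + \<epsilon> * 1)"
      by (rule meas_linear[OF m G H\<epsilon>]) simp
    also have "\<mu> (\<lambda>x. 1 * H x + \<epsilon> * 1) = 1 * \<mu> H + \<epsilon> * \<mu> (\<lambda>_. 1)"
      by (rule meas_linear[OF m H cfuns_const]) simp
    finally show ?thesis using \<open>\<mu> H = 0\<close> by simp
  qed
  show ?thesis
  proof (rule field_le_epsilon)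
    fix e :: real assume "0 < e"
    define \<epsilon> where "\<epsilon> = e / (\<mu> (\<lambda>_. 1) + 1)"
    have "0 < \<epsilon>" using \<open>0 < e\<close> total by (simp add: \<epsilon>_def)
    moreover have "\<epsilon> * \<mu> (\<lambda>_. 1) \<le> e" using \<open>0 < e\<close> total by (simp add: \<epsilon>_def field_simps)
    ultimately show "0 \<le> \<mu> G + e" using main by force
  qed
qed

lemma meas_plus_zero_on_support:
  fixes \<mu> :: "'a::t2_space meas"
  assumes cpt: "compact (UNIV :: 'a set)" and \<mu>: "\<mu> \<in> meas_plus" and G: "G \<in> cfuns"
    and zero: "\<And>x. x \<in> msupport \<mu> \<Longrightarrow> G x = 0"
  shows "\<mu> G = 0"
proof -
  have m: "\<mu> \<in> meas" using \<mu> by (simp add: meas_plus_def)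
  have negG: "(\<lambda>x. (-1) * G x) \<in> cfuns" using cfuns_linear[OF G G, of "-1" 0] by simp
  have "0 \<le> \<mu> (\<lambda>x. (-1) * G x)"
    using meas_plus_nonneg_on_support[OF cpt \<mu> negG] zero by simp
  moreover have "\<mu> (\<lambda>x. (-1) * G x) = - \<mu> G"
    using meas_scale[OF m G, of "\<lambda>x. (-1) * G x" "-1"] by simp
  moreover have "0 \<le> \<mu> G"
    using meas_plus_nonneg_on_support[OF cpt \<mu> G] zero by simp
  ultimately show ?thesis by simp
qed

section \<open>Separation of a point from a convex cone in finitely many coordinates\<close>

lemma bounded_seq_convergent_subseq_on:
  fixes X :: "nat \<Rightarrow> 'i \<Rightarrow> real"
  assumes "finite I" and "\<And>n i. i \<in> I \<Longrightarrow> \<bar>X n i\<bar> \<le> B i"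
  obtains l r where "strict_mono r" "\<And>i. i \<in> I \<Longrightarrow> (\<lambda>n. X (r n) i) \<longlonglongrightarrow> l i"
proof -
  have "\<forall>\<delta>\<subseteq>I. \<exists>l :: 'i \<Rightarrow> real. \<exists>r :: nat \<Rightarrow> nat. strict_mono r \<and>
      (\<forall>\<epsilon>>0. eventually (\<lambda>n. \<forall>i\<in>\<delta>. dist (X (r n) i) (l i) < \<epsilon>) sequentially)"
  proof (rule compact_lemma_general[where proj = "\<lambda>x k. x k" and unproj = "\<lambda>e. e"])
    fix k assume "k \<in> I"
    then show "bounded ((\<lambda>x. x k) ` range X)"
      unfolding bounded_iff using assms(2) by auto
  qed (use assms(1) in auto)
  then obtain l r where "strict_mono r"
    and conv: "\<forall>\<epsilon>>0. eventually (\<lambda>n. \<forall>i\<in>I. dist (X (r n) i) (l i) < \<epsilon>) sequentially"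
    by blast
  moreover have "(\<lambda>n. X (r n) i) \<longlonglongrightarrow> l i" if "i \<in> I" for i
    unfolding tendsto_iff using conv that by (auto elim!: eventually_mono)
  ultimately show ?thesis using that by blast
qed

lemma sum_sq_min_imp_inner_nonneg:
  fixes l p y :: "'i \<Rightarrow> real"
  assumes min: "\<And>t. 0 < t \<Longrightarrow> t \<le> 1 \<Longrightarrow>
    (\<Sum>i\<in>I. (l i - p i)\<^sup>2) \<le> (\<Sum>i\<in>I. ((1 - t) * l i + t * y i - p i)\<^sup>2)"
  shows "0 \<le> (\<Sum>i\<in>I. (l i - p i) * (y i - l i))"
proof (rule ccontr)
  define S where "S = (\<Sum>i\<in>I. (l i - p i) * (y i - l i))"
  define Q where "Q = (\<Sum>i\<in>I. (y i - l i)\<^sup>2)"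
  assume "\<not> 0 \<le> (\<Sum>i\<in>I. (l i - p i) * (y i - l i))"
  then have S: "S < 0" by (simp add: S_def)
  have Q: "0 \<le> Q" unfolding Q_def by (simp add: sum_nonneg)
  have expand: "(\<Sum>i\<in>I. ((1 - t) * l i + t * y i - p i)\<^sup>2) = (\<Sum>i\<in>I. (l i - p i)\<^sup>2) + t * (2 * S + t * Q)"
    for t
  proof -
    have "(\<Sum>i\<in>I. ((1 - t) * l i + t * y i - p i)\<^sup>2)
        = (\<Sum>i\<in>I. (l i - p i)\<^sup>2 + 2 * t * ((l i - p i) * (y i - l i)) + t\<^sup>2 * (y i - l i)\<^sup>2)"
      by (intro sum.cong) (auto simp: power2_eq_square algebra_simps)
    also have "\<dots> = (\<Sum>i\<in>I. (l i - p i)\<^sup>2) + 2 * t * S + t\<^sup>2 * Q"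
      unfolding S_def Q_def by (simp add: sum.distrib sum_distrib_left)
    finally show ?thesis by (simp add: power2_eq_square algebra_simps)
  qed
  define t where "t = min 1 (- S / (Q + 1))"
  have "0 < - S / (Q + 1)" using S Q by (intro divide_pos_pos) auto
  then have t: "0 < t" "t \<le> 1" by (auto simp: t_def)
  have "t * Q \<le> (- S / (Q + 1)) * Q" unfolding t_def using Q by (intro mult_right_mono) auto
  also have "\<dots> \<le> - S" using Q S by (simp add: field_simps)
  finally have "t * (2 * S + t * Q) < 0" using S t(1) by (intro mult_pos_neg) auto
  then show False using min[OF t] expand[of t] by linarith
qed

lemma convex_projection_finite:
  fixes K :: "('i \<Rightarrow> real) set" and p :: "'i \<Rightarrow> real"
  assumes I: "finite I" and "K \<noteq> {}"
    and convex: "\<And>x y t. x \<in> K \<Longrightarrow> y \<in> K \<Longrightarrow> 0 \<le> t \<Longrightarrow> t \<le> 1 \<Longrightarrow> (\<lambda>i. (1 - t) * x i + t * y i) \<in> K"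
  obtains l where "\<And>\<epsilon>. 0 < \<epsilon> \<Longrightarrow> \<exists>x\<in>K. \<forall>i\<in>I. \<bar>x i - l i\<bar> < \<epsilon>"
    and "\<And>y. y \<in> K \<Longrightarrow> 0 \<le> (\<Sum>i\<in>I. (l i - p i) * (y i - l i))"
proof -
  define g where "g x = (\<Sum>i\<in>I. (x i - p i)\<^sup>2)" for x
  define d where "d = Inf (g ` K)"
  have "bdd_below (g ` K)" by (rule bdd_belowI[of _ 0]) (auto simp: g_def sum_nonneg)
  then have d_le: "d \<le> g x" if "x \<in> K" for x unfolding d_def using that by (simp add: cInf_lower)
  have "\<exists>x\<in>K. g x < d + 1 / real (Suc n)" for n
  proof -
    have "Inf (g ` K) < d + 1 / real (Suc n)" by (simp add: d_def)
    then show ?thesis using cInf_lessD[of "g ` K"] assms(2) by blast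
  qed
  then obtain X where X: "\<And>n. X n \<in> K" "\<And>n. g (X n) < d + 1 / real (Suc n)" by metis
  have small: "\<bar>a\<bar> \<le> d + 2" if "a\<^sup>2 \<le> d + 1" for a :: real
  proof -
    have "2 * \<bar>a\<bar> \<le> a\<^sup>2 + 1"
      using sum_power2_ge_zero[of "\<bar>a\<bar> - 1" 0] by (simp add: power2_diff power2_abs)
    with that show ?thesis by linarith
  qed
  have X_bounded: "\<bar>X n i\<bar> \<le> \<bar>p i\<bar> + d + 2" if "i \<in> I" for n i
  proof -
    have "(X n i - p i)\<^sup>2 \<le> g (X n)" unfolding g_def using I that by (intro member_le_sum) auto
    moreover have "1 / real (Suc n) \<le> 1" by simp
    ultimately have "\<bar>X n i - p i\<bar> \<le> d + 2" using X(2)[of n] by (intro small) linarith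
    moreover have "\<bar>X n i\<bar> \<le> \<bar>X n i - p i\<bar> + \<bar>p i\<bar>"
      using abs_triangle_ineq[of "X n i - p i" "p i"] by simp
    ultimately show ?thesis by linarith
  qed
  obtain l r where r: "strict_mono r" and lim: "\<And>i. i \<in> I \<Longrightarrow> (\<lambda>n. X (r n) i) \<longlonglongrightarrow> l i"
    using bounded_seq_convergent_subseq_on[where X = X and B = "\<lambda>i. \<bar>p i\<bar> + d + 2", OF I X_bounded]
    by blast
  have "(\<lambda>n. 1 / real (Suc (r n))) \<longlonglongrightarrow> 0"
    using LIMSEQ_subseq_LIMSEQ[OF LIMSEQ_Suc[OF lim_const_over_n[of 1]] r] by (simp add: o_def)
  from tendsto_add[OF tendsto_const[of d] this]
  have upper: "(\<lambda>n. d + 1 / real (Suc (r n))) \<longlonglongrightarrow> d" by simp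
  have "eventually (\<lambda>n. d \<le> g (X (r n))) sequentially"
    using d_le X(1) by simp
  moreover have "eventually (\<lambda>n. g (X (r n)) \<le> d + 1 / real (Suc (r n))) sequentially"
    using X(2) by (simp add: less_imp_le)
  ultimately have "(\<lambda>n. g (X (r n))) \<longlonglongrightarrow> d"
    by (rule tendsto_sandwich[OF _ _ tendsto_const upper])
  moreover have "(\<lambda>n. g (X (r n))) \<longlonglongrightarrow> g l"
    unfolding g_def by (intro tendsto_sum tendsto_power tendsto_diff tendsto_const lim)
  ultimately have gl: "g l = d" using LIMSEQ_unique by blast
  show ?thesis
  proof
    fix \<epsilon> :: real assume "0 < \<epsilon>"
    then have "\<forall>i\<in>I. eventually (\<lambda>n. \<bar>X (r n) i - l i\<bar> < \<epsilon>) sequentially"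
      using lim by (simp add: tendsto_iff dist_real_def)
    then have "eventually (\<lambda>n. \<forall>i\<in>I. \<bar>X (r n) i - l i\<bar> < \<epsilon>) sequentially"
      by (rule eventually_ball_finite[OF I])
    then obtain N where "\<forall>i\<in>I. \<bar>X (r N) i - l i\<bar> < \<epsilon>"
      unfolding eventually_sequentially by blast
    then show "\<exists>x\<in>K. \<forall>i\<in>I. \<bar>x i - l i\<bar> < \<epsilon>" using X(1) by blast
  next
    fix y assume y: "y \<in> K"
    show "0 \<le> (\<Sum>i\<in>I. (l i - p i) * (y i - l i))"
    proof (rule sum_sq_min_imp_inner_nonneg)
      fix t :: real assume t: "0 < t" "t \<le> 1"
      have conv: "(\<lambda>n. g (\<lambda>i. (1 - t) * X (r n) i + t * y i)) \<longlonglongrightarrow> g (\<lambda>i. (1 - t) * l i + t * y i)"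
        unfolding g_def
        by (intro tendsto_sum tendsto_power tendsto_diff tendsto_add tendsto_mult tendsto_const lim)
      have "d \<le> g (\<lambda>i. (1 - t) * X (r n) i + t * y i)" for n
        using convex[OF X(1) y] t by (intro d_le) auto
      then have "d \<le> g (\<lambda>i. (1 - t) * l i + t * y i)" using LIMSEQ_le_const[OF conv] by blast
      then show "(\<Sum>i\<in>I. (l i - p i)\<^sup>2) \<le> (\<Sum>i\<in>I. ((1 - t) * l i + t * y i - p i)\<^sup>2)"
        using gl by (simp add: g_def)
    qed
  qed
qed

lemma finite_cone_separation:
  fixes K :: "('i \<Rightarrow> real) set" and p :: "'i \<Rightarrow> real"
  assumes I: "finite I"
    and add: "\<And>x y. x \<in> K \<Longrightarrow> y \<in> K \<Longrightarrow> (\<lambda>i. x i + y i) \<in> K"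
    and scale: "\<And>x c. x \<in> K \<Longrightarrow> 0 \<le> c \<Longrightarrow> (\<lambda>i. c * x i) \<in> K"
    and zero: "(\<lambda>i. 0) \<in> K"
    and far: "0 < e" "\<And>x. x \<in> K \<Longrightarrow> \<exists>i\<in>I. e \<le> \<bar>x i - p i\<bar>"
  obtains w where "\<And>x. x \<in> K \<Longrightarrow> 0 \<le> (\<Sum>i\<in>I. w i * x i)" and "(\<Sum>i\<in>I. w i * p i) < 0"
proof -
  have "(\<lambda>i. (1 - t) * x i + t * y i) \<in> K" if "x \<in> K" "y \<in> K" "0 \<le> t" "t \<le> 1" for x y t
    using that by (intro add scale) auto
  then obtain l where near: "\<And>\<epsilon>. 0 < \<epsilon> \<Longrightarrow> \<exists>x\<in>K. \<forall>i\<in>I. \<bar>x i - l i\<bar> < \<epsilon>"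
    and var: "\<And>y. y \<in> K \<Longrightarrow> 0 \<le> (\<Sum>i\<in>I. (l i - p i) * (y i - l i))"
    using convex_projection_finite[OF I] zero by blast
  define w where "w i = l i - p i" for i
  have ray: "(\<Sum>i\<in>I. w i * l i) \<le> c * (\<Sum>i\<in>I. w i * y i)" if "y \<in> K" "0 \<le> c" for y c
  proof -
    have "0 \<le> (\<Sum>i\<in>I. w i * (c * y i - l i))" using var[OF scale[OF that]] by (simp add: w_def)
    also have "\<dots> = c * (\<Sum>i\<in>I. w i * y i) - (\<Sum>i\<in>I. w i * l i)"
      by (simp add: algebra_simps sum_subtractf sum_distrib_left)
    finally show ?thesis by simp
  qed
  have wl: "(\<Sum>i\<in>I. w i * l i) \<le> 0" using ray[OF zero, of 0] by simp
  have "0 \<le> (\<Sum>i\<in>I. w i * y i)" if "y \<in> K" for y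
  proof (rule ccontr)
    assume neg: "\<not> 0 \<le> (\<Sum>i\<in>I. w i * y i)"
    define c where "c = (\<bar>\<Sum>i\<in>I. w i * l i\<bar> + 1) / - (\<Sum>i\<in>I. w i * y i)"
    have "0 \<le> c" unfolding c_def using neg by (intro divide_nonneg_pos) auto
    moreover have "c * (\<Sum>i\<in>I. w i * y i) = - (\<bar>\<Sum>i\<in>I. w i * l i\<bar> + 1)"
      using neg by (simp add: c_def)
    ultimately show False using ray[OF that] by fastforce
  qed
  moreover have "(\<Sum>i\<in>I. w i * p i) < 0"
  proof -
    have "0 < e / 2" using far(1) by simp
    then obtain x where "x \<in> K" and x: "\<forall>i\<in>I. \<bar>x i - l i\<bar> < e / 2" using near by blast
    then obtain i where i: "i \<in> I" "e \<le> \<bar>x i - p i\<bar>" using far(2) by blast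
    moreover have "\<bar>x i - l i\<bar> < e / 2" using x i(1) by blast
    moreover have "\<bar>x i - p i\<bar> \<le> \<bar>x i - l i\<bar> + \<bar>l i - p i\<bar>"
      using abs_triangle_ineq[of "x i - l i" "l i - p i"] by simp
    ultimately have "e / 2 \<le> \<bar>l i - p i\<bar>" using i(2) by linarith
    then have "(e / 2)\<^sup>2 \<le> \<bar>l i - p i\<bar>\<^sup>2" using far(1) by (intro power_mono) auto
    also have "\<dots> = (l i - p i)\<^sup>2" by simp
    also have "\<dots> \<le> (\<Sum>i\<in>I. (l i - p i)\<^sup>2)" using I i(1) by (intro member_le_sum) auto
    finally have "(e / 2)\<^sup>2 \<le> (\<Sum>i\<in>I. (l i - p i)\<^sup>2)" .
    moreover have "0 < (e / 2)\<^sup>2" using far(1) by simp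
    moreover have "(\<Sum>i\<in>I. w i * (l i - p i)) = (\<Sum>i\<in>I. (l i - p i)\<^sup>2)"
      by (simp add: w_def power2_eq_square)
    ultimately have "0 < (\<Sum>i\<in>I. w i * (l i - p i))" by linarith
    moreover have "(\<Sum>i\<in>I. w i * p i) = (\<Sum>i\<in>I. w i * l i) - (\<Sum>i\<in>I. w i * (l i - p i))"
      by (simp add: algebra_simps sum_subtractf)
    ultimately show ?thesis using wl by linarith
  qed
  ultimately show ?thesis using that by blast
qed

section \<open>The closed cone \<open>hatP\<close>\<close>

definition close_on :: "('a \<Rightarrow> real) set \<Rightarrow> real \<Rightarrow> 'a meas \<times> 'a meas \<Rightarrow> 'a meas \<times> 'a meas \<Rightarrow> bool" where
  "close_on F e u v \<longleftrightarrow> (\<forall>f\<in>F. \<bar>fst u f - fst v f\<bar> < e \<and> \<bar>snd u f - snd v f\<bar> < e)"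

definition rays :: "('a meas \<times> 'a meas) set \<Rightarrow> ('a meas \<times> 'a meas) set" where
  "rays P = {pscale c u | c u. 0 \<le> c \<and> u \<in> P}"

lemma mem_hatP_iff:
  "u \<in> hatP P \<longleftrightarrow> u \<in> Vsp \<and> (\<forall>F e. finite F \<longrightarrow> F \<subseteq> cfuns \<longrightarrow> 0 < e \<longrightarrow> (\<exists>v\<in>rays P. close_on F e u v))"
  by (auto simp: hatP_def wclosure_def close_on_def rays_def)

lemma close_on_trans:
  assumes "close_on F d u v" "close_on F d' v w"
  shows "close_on F (d + d') u w"
  unfolding close_on_def
proof
  fix f assume "f \<in> F"
  then have "\<bar>fst u f - fst v f\<bar> < d" "\<bar>snd u f - snd v f\<bar> < d"
    "\<bar>fst v f - fst w f\<bar> < d'" "\<bar>snd v f - snd w f\<bar> < d'"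
    using assms unfolding close_on_def by auto
  then show "\<bar>fst u f - fst w f\<bar> < d + d' \<and> \<bar>snd u f - snd w f\<bar> < d + d'" by arith
qed

lemma close_on_pscale:
  assumes "0 < c" "close_on F (e / c) u v"
  shows "close_on F e (pscale c u) (pscale c v)"
  unfolding close_on_def
proof
  have scaled: "\<bar>c * a - c * b\<bar> < e" if "\<bar>a - b\<bar> < e / c" for a b
  proof -
    have "\<bar>c * a - c * b\<bar> = c * \<bar>a - b\<bar>" using assms(1) by (simp add: abs_mult flip: right_diff_distrib)
    also have "\<dots> < c * (e / c)" using that assms(1) by (intro mult_strict_left_mono)
    finally show ?thesis using assms(1) by simp
  qed
  fix f assume "f \<in> F"
  then show "\<bar>fst (pscale c u) f - fst (pscale c v) f\<bar> < e \<and> \<bar>snd (pscale c u) f - snd (pscale c v) f\<bar> < e"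
    using assms(2) scaled unfolding close_on_def by (simp add: pscale_def mscale_def)
qed

lemma pscale_pair [simp]: "pscale c (a, b) = (mscale c a, mscale c b)"
  by (simp add: pscale_def)

lemma padd_pair [simp]: "padd (a, b) (a', b') = (madd a a', madd b b')"
  by (simp add: padd_def)

lemma mscale_mzero [simp]: "mscale c mzero = mzero"
  by (simp add: mscale_def mzero_def)

lemma pscale_pscale: "pscale c (pscale d u) = pscale (c * d) u"
  by (simp add: pscale_def mscale_def mult.assoc)

lemma pscale_one [simp]: "pscale 1 u = u"
  by (simp add: pscale_def mscale_def)

lemma rays_pscale:
  assumes "0 \<le> c" "v \<in> rays P"
  shows "pscale c v \<in> rays P"
proof -
  obtain d w where "v = pscale d w" "0 \<le> d" "w \<in> P" using assms(2) unfolding rays_def by blast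
  then have "\<exists>c' w'. pscale c v = pscale c' w' \<and> 0 \<le> c' \<and> w' \<in> P"
    using assms(1) by (intro exI[of _ "c * d"] exI[of _ w]) (simp add: pscale_pscale)
  then show ?thesis unfolding rays_def by blast
qed

lemma mem_Vsp_iff: "u \<in> Vsp \<longleftrightarrow> fst u \<in> meas \<and> fst u (\<lambda>_. 1) = 0 \<and> snd u \<in> meas"
  by (cases u) (auto simp: Vsp_def meas_zero_total_def)

lemma cycle_mem_Vsp [simp]: "(mzero, q) \<in> Vsp \<longleftrightarrow> q \<in> meas"
  by (simp add: mem_Vsp_iff) (simp add: mzero_def)

lemma pscale_Vsp: "u \<in> Vsp \<Longrightarrow> pscale c u \<in> Vsp"
  by (auto simp: mem_Vsp_iff pscale_def mscale_meas) (simp add: mscale_def)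

lemma hatP_subset_Vsp: "hatP P \<subseteq> Vsp"
  by (auto simp: mem_hatP_iff)

lemma subset_hatP: "P \<subseteq> Vsp \<Longrightarrow> P \<subseteq> hatP P"
proof
  fix u assume "P \<subseteq> Vsp" "u \<in> P"
  then have "u \<in> Vsp" by blast
  have "\<exists>c w. u = pscale c w \<and> 0 \<le> c \<and> w \<in> P"
    using \<open>u \<in> P\<close> by (intro exI[of _ 1] exI[of _ u]) simp
  then have "u \<in> rays P" unfolding rays_def by blast
  show "u \<in> hatP P"
    unfolding mem_hatP_iff
  proof (intro conjI allI impI)
    fix F and e :: real assume "0 < e"
    then show "\<exists>v\<in>rays P. close_on F e u v"
      using \<open>u \<in> rays P\<close> by (intro bexI[of _ u]) (simp_all add: close_on_def)
  qed (fact \<open>u \<in> Vsp\<close>)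
qed

lemma hatP_closedI:
  assumes "u \<in> Vsp"
    and approx: "\<And>F e. finite F \<Longrightarrow> F \<subseteq> cfuns \<Longrightarrow> 0 < e \<Longrightarrow> \<exists>v\<in>hatP P. close_on F e u v"
  shows "u \<in> hatP P"
  unfolding mem_hatP_iff
proof (intro conjI allI impI)
  fix F :: "('a \<Rightarrow> real) set" and e :: real assume F: "finite F" "F \<subseteq> cfuns" and "0 < e"
  then obtain v where v: "v \<in> hatP P" "close_on F (e / 2) u v" using approx[of F "e / 2"] by auto
  moreover have "0 < e / 2" using \<open>0 < e\<close> by simp
  ultimately obtain w where "w \<in> rays P" "close_on F (e / 2) v w"
    using F unfolding mem_hatP_iff by blast
  then show "\<exists>w\<in>rays P. close_on F e u w" using close_on_trans[OF v(2)] by fastforce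
qed (fact assms(1))

lemma hatP_pscale:
  assumes zero: "(mzero, mzero) \<in> hatP P" and u: "u \<in> hatP P" and "0 \<le> c"
  shows "pscale c u \<in> hatP P"
proof (cases "c = 0")
  case True
  then show ?thesis using zero by (simp add: pscale_def mscale_def mzero_def)
next
  case False
  with \<open>0 \<le> c\<close> have "0 < c" by simp
  show ?thesis
    unfolding mem_hatP_iff
  proof (intro conjI allI impI)
    show "pscale c u \<in> Vsp" using u hatP_subset_Vsp pscale_Vsp by blast
    fix F :: "('a \<Rightarrow> real) set" and e :: real assume "finite F" "F \<subseteq> cfuns" "0 < e"
    with \<open>0 < c\<close> u obtain v where "v \<in> rays P" "close_on F (e / c) u v"
      unfolding mem_hatP_iff by (meson divide_pos_pos)
    moreover from \<open>v \<in> rays P\<close> have "pscale c v \<in> rays P" by (rule rays_pscale[OF \<open>0 \<le> c\<close>])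
    ultimately show "\<exists>w\<in>rays P. close_on F e (pscale c u) w"
      using close_on_pscale[OF \<open>0 < c\<close>] by blast
  qed
qed

lemma hatP_padd:
  assumes "thermo_theory P" and zero: "(mzero, mzero) \<in> hatP P" and "u \<in> hatP P" "v \<in> hatP P"
  shows "padd u v \<in> hatP P"
proof -
  \<comment> \<open>\<open>hatP\<close> is convex by hypothesis and a cone, hence closed under addition.\<close>
  have "\<forall>t::real. 0 \<le> t \<and> t \<le> 1 \<longrightarrow> padd (pscale t u) (pscale (1 - t) v) \<in> hatP P"
    using assms unfolding thermo_theory_def by blast
  from this[rule_format, of "1/2"] have "padd (pscale (1/2) u) (pscale (1/2) v) \<in> hatP P"
    by simp
  then have "pscale 2 (padd (pscale (1/2) u) (pscale (1/2) v)) \<in> hatP P"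
    by (rule hatP_pscale[OF zero]) simp
  moreover have "pscale 2 (padd (pscale (1/2) u) (pscale (1/2) v)) = padd u v"
    by (simp add: pscale_def padd_def mscale_def madd_def algebra_simps)
  ultimately show ?thesis by simp
qed

lemma CD_pair_hatP:
  assumes cd: "CD_pair P \<eta> T" and u: "u \<in> hatP P"
  shows "snd u (\<lambda>x. 1 / T x) \<le> fst u \<eta>"
proof (rule field_le_epsilon)
  fix e :: real assume "0 < e"
  have F: "finite {\<eta>, \<lambda>x. 1 / T x}" "{\<eta>, \<lambda>x. 1 / T x} \<subseteq> cfuns"
    using cd cfuns_inverse unfolding CD_pair_def by auto
  then obtain v where "v \<in> rays P" and close: "close_on {\<eta>, \<lambda>x. 1 / T x} (e / 2) u v"
    using u \<open>0 < e\<close> unfolding mem_hatP_iff by (meson half_gt_zero)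
  then obtain c dm q where v: "v = pscale c (dm, q)" "0 \<le> c" "(dm, q) \<in> P"
    unfolding rays_def by auto
  then have "c * q (\<lambda>x. 1 / T x) \<le> c * dm \<eta>"
    using cd unfolding CD_pair_def by (auto intro!: mult_left_mono)
  then have "snd v (\<lambda>x. 1 / T x) \<le> fst v \<eta>" using v(1) by (simp add: mscale_def)
  moreover have "\<bar>fst u \<eta> - fst v \<eta>\<bar> < e / 2" "\<bar>snd u (\<lambda>x. 1 / T x) - snd v (\<lambda>x. 1 / T x)\<bar> < e / 2"
    using close by (auto simp: close_on_def)
  ultimately show "snd u (\<lambda>x. 1 / T x) \<le> fst u \<eta> + e" by linarith
qed

definition coords :: "'a meas \<times> 'a meas \<Rightarrow> ('a \<Rightarrow> real) \<times> bool \<Rightarrow> real" where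
  "coords u = (\<lambda>(f, b). if b then fst u f else snd u f)"

lemma coords_padd: "coords (padd u v) = (\<lambda>i. coords u i + coords v i)"
  by (auto simp: coords_def padd_def madd_def)

lemma coords_pscale: "coords (pscale c u) = (\<lambda>i. c * coords u i)"
  by (auto simp: coords_def pscale_def mscale_def)

lemma coords_zero: "coords (mzero, mzero) = (\<lambda>i. 0)"
  by (auto simp: coords_def mzero_def)

lemma sum_coords:
  assumes "fst u \<in> meas" "snd u \<in> meas" "finite F" "F \<subseteq> cfuns"
  shows "(\<Sum>i\<in>F \<times> UNIV. w i * coords u i)
    = fst u (\<lambda>x. \<Sum>f\<in>F. w (f, True) * f x) + snd u (\<lambda>x. \<Sum>f\<in>F. w (f, False) * f x)"
proof -
  have scaled: "(\<lambda>x. c * f x) \<in> cfuns" if "f \<in> F" for f c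
    using assms(4) that cfuns_linear[of f f c 0] by auto
  have "(\<Sum>i\<in>F \<times> UNIV. w i * coords u i) = (\<Sum>f\<in>F. \<Sum>b\<in>UNIV. w (f, b) * coords u (f, b))"
    by (simp add: sum.cartesian_product)
  also have "\<dots> = (\<Sum>f\<in>F. w (f, True) * fst u f) + (\<Sum>f\<in>F. w (f, False) * snd u f)"
    by (simp add: UNIV_bool coords_def sum.distrib add.commute)
  also have "\<dots> = fst u (\<lambda>x. \<Sum>f\<in>F. w (f, True) * f x) + snd u (\<lambda>x. \<Sum>f\<in>F. w (f, False) * f x)"
  proof -
    have "fst u (\<lambda>x. c * f x) = c * fst u f" "snd u (\<lambda>x. c * f x) = c * snd u f" if "f \<in> F" for f c
      using meas_scale[OF assms(1)] meas_scale[OF assms(2)] assms(4) that by auto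
    then show ?thesis by (simp add: meas_sum[OF assms(1,3) scaled] meas_sum[OF assms(2,3) scaled])
  qed
  finally show ?thesis .
qed

lemma dual_cone_approx:
  fixes A :: "('a::topological_space meas \<times> 'a meas) set"
  assumes A_meas: "\<And>u. u \<in> A \<Longrightarrow> fst u \<in> meas \<and> snd u \<in> meas"
    and add: "\<And>u v. u \<in> A \<Longrightarrow> v \<in> A \<Longrightarrow> padd u v \<in> A"
    and scale: "\<And>u c. u \<in> A \<Longrightarrow> 0 \<le> c \<Longrightarrow> pscale c u \<in> A"
    and zero: "(mzero, mzero) \<in> A"
    and t: "fst t \<in> meas" "snd t \<in> meas"
    and dual: "\<And>G1 G2. G1 \<in> cfuns \<Longrightarrow> G2 \<in> cfuns \<Longrightarrow> \<forall>u\<in>A. 0 \<le> fst u G1 + snd u G2 \<Longrightarrow>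
      0 \<le> fst t G1 + snd t G2"
    and F: "finite F" "F \<subseteq> cfuns" and "0 < e"
  shows "\<exists>v\<in>A. close_on F e t v"
proof (rule ccontr)
  assume far: "\<not> (\<exists>v\<in>A. close_on F e t v)"
  define I where "I = F \<times> (UNIV :: bool set)"
  obtain w where w: "\<And>x. x \<in> coords ` A \<Longrightarrow> 0 \<le> (\<Sum>i\<in>I. w i * x i)" "(\<Sum>i\<in>I. w i * coords t i) < 0"
  proof (rule finite_cone_separation[of I "coords ` A" e "coords t"])
    show "finite I" using F(1) by (simp add: I_def)
    show "(\<lambda>i. x i + y i) \<in> coords ` A" if xy: "x \<in> coords ` A" "y \<in> coords ` A" for x y
    proof -
      obtain u v where "u \<in> A" "v \<in> A" "x = coords u" "y = coords v" using xy by blast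
      moreover from \<open>u \<in> A\<close> \<open>v \<in> A\<close> have "padd u v \<in> A" by (rule add)
      ultimately show ?thesis using image_eqI[of _ coords "padd u v", OF coords_padd[symmetric]] by simp
    qed
    show "(\<lambda>i. c * x i) \<in> coords ` A" if x: "x \<in> coords ` A" and "0 \<le> c" for x c
    proof -
      obtain u where "u \<in> A" "x = coords u" using x by blast
      moreover from \<open>u \<in> A\<close> \<open>0 \<le> c\<close> have "pscale c u \<in> A" by (rule scale)
      ultimately show ?thesis using image_eqI[of _ coords "pscale c u", OF coords_pscale[symmetric]] by simp
    qed
    show "(\<lambda>i. 0) \<in> coords ` A" by (rule image_eqI[of _ coords "(mzero, mzero)", OF coords_zero[symmetric] zero])
    show "\<exists>i\<in>I. e \<le> \<bar>x i - coords t i\<bar>" if x: "x \<in> coords ` A" for x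
    proof -
      obtain v where "v \<in> A" "x = coords v" using x by blast
      with far have "\<not> close_on F e t v" by blast
      then obtain f where "f \<in> F" "e \<le> \<bar>fst v f - fst t f\<bar> \<or> e \<le> \<bar>snd v f - snd t f\<bar>"
        unfolding close_on_def by (auto simp: abs_minus_commute[of "fst t _"] abs_minus_commute[of "snd t _"])
      then have "(f, True) \<in> I \<and> e \<le> \<bar>x (f, True) - coords t (f, True)\<bar>
          \<or> (f, False) \<in> I \<and> e \<le> \<bar>x (f, False) - coords t (f, False)\<bar>"
        unfolding I_def \<open>x = coords v\<close> coords_def by auto
      then show ?thesis by blast
    qed
  qed (use \<open>0 < e\<close> in auto)
  define G1 where "G1 x = (\<Sum>f\<in>F. w (f, True) * f x)" for x
  define G2 where "G2 x = (\<Sum>f\<in>F. w (f, False) * f x)" for x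
  have G: "G1 \<in> cfuns" "G2 \<in> cfuns"
    using F(2) unfolding G1_def G2_def cfuns_def by (auto intro!: continuous_intros)
  have "0 \<le> fst u G1 + snd u G2" if "u \<in> A" for u
  proof -
    have "0 \<le> (\<Sum>i\<in>I. w i * coords u i)" using w(1) that by blast
    also have "\<dots> = fst u G1 + snd u G2"
      unfolding I_def G1_def G2_def using A_meas[OF that] by (intro sum_coords[OF _ _ F]) auto
    finally show ?thesis .
  qed
  then have "0 \<le> fst t G1 + snd t G2" using dual[OF G] by blast
  moreover have "(\<Sum>i\<in>I. w i * coords t i) = fst t G1 + snd t G2"
    unfolding I_def G1_def G2_def by (rule sum_coords[OF t F])
  ultimately show False using w(2) by simp
qed

lemma hatP_if_dual_cone:
  assumes A: "A \<subseteq> hatP P"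
    and add: "\<And>u v. u \<in> A \<Longrightarrow> v \<in> A \<Longrightarrow> padd u v \<in> A"
    and scale: "\<And>u c. u \<in> A \<Longrightarrow> 0 \<le> c \<Longrightarrow> pscale c u \<in> A"
    and zero: "(mzero, mzero) \<in> A"
    and t: "t \<in> Vsp"
    and dual: "\<And>G1 G2. G1 \<in> cfuns \<Longrightarrow> G2 \<in> cfuns \<Longrightarrow> \<forall>u\<in>A. 0 \<le> fst u G1 + snd u G2 \<Longrightarrow>
      0 \<le> fst t G1 + snd t G2"
  shows "t \<in> hatP P"
proof (rule hatP_closedI[OF t])
  have "fst u \<in> meas \<and> snd u \<in> meas" if "u \<in> A" for u
  proof -
    have "u \<in> Vsp" using that A hatP_subset_Vsp by blast
    then show ?thesis by (simp add: mem_Vsp_iff)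
  qed
  moreover have "fst t \<in> meas" "snd t \<in> meas" using t by (auto simp: mem_Vsp_iff)
  ultimately show "\<exists>v\<in>hatP P. close_on F e t v" if "finite F" "F \<subseteq> cfuns" "0 < e" for F e
    using dual_cone_approx[OF _ add scale zero _ _ dual that] A by blast
qed

section \<open>Reversible cycles\<close>

definition reversible_cycle :: "('a::topological_space meas \<times> 'a meas) set \<Rightarrow> 'a meas \<Rightarrow> bool" where
  "reversible_cycle P q \<longleftrightarrow> (mzero, q) \<in> hatP P \<and> (mzero, mscale (-1) q) \<in> hatP P"

lemma mscale_mscale [simp]: "mscale c (mscale d \<mu>) = mscale (c * d) \<mu>"
  by (simp add: mscale_def mult.assoc)

lemma madd_mzero [simp]: "madd mzero mzero = mzero"
  by (simp add: madd_def mzero_def)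

lemma reversible_iff_reversible_cycle: "reversible P (mzero, q) \<longleftrightarrow> reversible_cycle P q"
  by (simp add: reversible_def reversible_cycle_def)

lemma reversible_cycle_zero: "(mzero, mzero) \<in> hatP P \<Longrightarrow> reversible_cycle P mzero"
  by (simp add: reversible_cycle_def)

lemma reversible_cycle_madd:
  assumes "thermo_theory P" "(mzero, mzero) \<in> hatP P" "reversible_cycle P q1" "reversible_cycle P q2"
  shows "reversible_cycle P (madd q1 q2)"
proof -
  have "padd (mzero, q1) (mzero, q2) \<in> hatP P"
    "padd (mzero, mscale (-1) q1) (mzero, mscale (-1) q2) \<in> hatP P"
    using hatP_padd[OF assms(1,2)] assms(3,4) unfolding reversible_cycle_def by blast+
  moreover have "madd (mscale (-1) q1) (mscale (-1) q2) = mscale (-1) (madd q1 q2)"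
    by (simp add: madd_def mscale_def)
  ultimately show ?thesis unfolding reversible_cycle_def by simp
qed

lemma reversible_cycle_mscale:
  assumes zero: "(mzero, mzero) \<in> hatP P" and q: "reversible_cycle P q"
  shows "reversible_cycle P (mscale c q)"
proof (cases "0 \<le> c")
  case True
  then have "pscale c (mzero, q) \<in> hatP P" "pscale c (mzero, mscale (-1) q) \<in> hatP P"
    using hatP_pscale[OF zero] q unfolding reversible_cycle_def by blast+
  then show ?thesis unfolding reversible_cycle_def by (simp add: mult.commute)
next
  case False
  then have "0 \<le> - c" by simp
  then have "pscale (- c) (mzero, q) \<in> hatP P" "pscale (- c) (mzero, mscale (-1) q) \<in> hatP P"
    using hatP_pscale[OF zero _ \<open>0 \<le> - c\<close>] q unfolding reversible_cycle_def by blast+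
  then show ?thesis unfolding reversible_cycle_def by simp
qed

lemma reversible_cycle_entropy_zero:
  assumes "CD_pair P \<eta> T" "reversible_cycle P q"
  shows "q (\<lambda>x. 1 / T x) = 0"
  using CD_pair_hatP[OF assms(1), of "(mzero, q)"] CD_pair_hatP[OF assms(1), of "(mzero, mscale (-1) q)"]
    assms(2)
  unfolding reversible_cycle_def by (simp add: mzero_def mscale_def)

text \<open>The reversible cycles form a weak-star closed subspace, so by the bipolar theorem they
  contain every measure killed by all continuous functions that kill them.\<close>

lemma cycle_hatP_if_annihilated:
  fixes P :: "('a::topological_space meas \<times> 'a meas) set"
  assumes th: "thermo_theory P" and zero: "(mzero, mzero) \<in> hatP P" and q: "q \<in> meas"
    and annihilated: "\<And>G. G \<in> cfuns \<Longrightarrow> (\<And>\<nu>. reversible_cycle P \<nu> \<Longrightarrow> \<nu> G = 0) \<Longrightarrow> q G = 0"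
  shows "(mzero, q) \<in> hatP P"
proof -
  define A :: "('a meas \<times> 'a meas) set" where "A = {(mzero, \<nu>) | \<nu>. reversible_cycle P \<nu>}"
  show ?thesis
  proof (rule hatP_if_dual_cone[of A])
    show "A \<subseteq> hatP P" unfolding A_def reversible_cycle_def by blast
    show "padd u v \<in> A" if "u \<in> A" "v \<in> A" for u v
      using that reversible_cycle_madd[OF th zero] unfolding A_def by auto
    show "pscale c u \<in> A" if "u \<in> A" for u c
      using that reversible_cycle_mscale[OF zero] unfolding A_def by auto
    show "(mzero, mzero) \<in> A" using reversible_cycle_zero[OF zero] unfolding A_def by blast
    show "(mzero, q) \<in> Vsp" using q by simp
    fix G1 G2 assume "G1 \<in> cfuns" "G2 \<in> cfuns" and valid: "\<forall>u\<in>A. 0 \<le> fst u G1 + snd u G2"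
    have "\<nu> G2 = 0" if \<nu>: "reversible_cycle P \<nu>" for \<nu>
    proof -
      have "(mzero, \<nu>) \<in> A" "(mzero, mscale (-1) \<nu>) \<in> A"
        using \<nu> reversible_cycle_mscale[OF zero \<nu>] unfolding A_def by blast+
      then have "0 \<le> \<nu> G2" "0 \<le> - \<nu> G2" using valid by (force simp: mzero_def mscale_def)+
      then show ?thesis by simp
    qed
    then show "0 \<le> fst (mzero, q) G1 + snd (mzero, q) G2"
      using annihilated[OF \<open>G2 \<in> cfuns\<close>] by (simp add: mzero_def)
  qed
qed

lemma reversible_cycle_if_annihilated:
  fixes P :: "('a::topological_space meas \<times> 'a meas) set"
  assumes th: "thermo_theory P" and zero: "(mzero, mzero) \<in> hatP P" and q: "q \<in> meas"
    and annihilated: "\<And>G. G \<in> cfuns \<Longrightarrow> (\<And>\<nu>. reversible_cycle P \<nu> \<Longrightarrow> \<nu> G = 0) \<Longrightarrow> q G = 0"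
  shows "reversible_cycle P q"
proof -
  have "(mzero, q) \<in> hatP P" by (rule cycle_hatP_if_annihilated[OF th zero q annihilated])
  moreover have "(mzero, mscale (-1) q) \<in> hatP P"
  proof (rule cycle_hatP_if_annihilated[OF th zero mscale_meas[OF q]])
    show "mscale (-1) q G = 0" if "G \<in> cfuns" "\<And>\<nu>. reversible_cycle P \<nu> \<Longrightarrow> \<nu> G = 0" for G
    proof -
      have "q G = 0" using that by (rule annihilated)
      then show ?thesis by (simp add: mscale_def)
    qed
  qed
  ultimately show ?thesis unfolding reversible_cycle_def ..
qed

section \<open>Carnot cycles\<close>

definition hotness_level :: "('a::topological_space meas \<times> 'a meas) set \<Rightarrow> 'a \<Rightarrow> 'a set" where
  "hotness_level P \<sigma> = {\<sigma>'. same_hotness P \<sigma> \<sigma>'}"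

lemma hotness_levels_eq: "hotness_levels P = range (hotness_level P)"
  by (auto simp: hotness_levels_def hotness_level_def)

lemma mem_own_hotness_level: "(mzero, mzero) \<in> hatP P \<Longrightarrow> \<sigma> \<in> hotness_level P \<sigma>"
  by (simp add: hotness_level_def same_hotness_def mdiff_def mzero_def)

lemma reversible_cycle_same_hotness:
  assumes "same_hotness P \<sigma> \<sigma>'"
  shows "reversible_cycle P (mdiff (dirac \<sigma>') (dirac \<sigma>))"
proof -
  have "mscale (-1) (mdiff (dirac \<sigma>') (dirac \<sigma>)) = mdiff (dirac \<sigma>) (dirac \<sigma>')"
    by (simp add: mscale_def mdiff_def)
  then show ?thesis using assms unfolding same_hotness_def reversible_cycle_def by simp
qed

lemma reversible_cycle_collapse_to_state:
  fixes P :: "('a::t2_space meas \<times> 'a meas) set"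
  assumes cpt: "compact (UNIV :: 'a set)" and th: "thermo_theory P" and zero: "(mzero, mzero) \<in> hatP P"
    and \<mu>: "\<mu> \<in> meas_plus" and supp: "msupport \<mu> \<subseteq> hotness_level P \<sigma>"
  shows "reversible_cycle P (mdiff \<mu> (mscale (\<mu> (\<lambda>_. 1)) (dirac \<sigma>)))"
proof (rule reversible_cycle_if_annihilated[OF th zero])
  have m: "\<mu> \<in> meas" using \<mu> by (simp add: meas_plus_def)
  then show "mdiff \<mu> (mscale (\<mu> (\<lambda>_. 1)) (dirac \<sigma>)) \<in> meas"
    by (intro mdiff_meas mscale_meas dirac_meas[OF cpt])
  fix G assume G: "G \<in> cfuns" and ann: "\<And>\<nu>. reversible_cycle P \<nu> \<Longrightarrow> \<nu> G = 0"
  have G\<sigma>: "(\<lambda>x. 1 * G x + (- G \<sigma>) * 1) \<in> cfuns" by (rule cfuns_linear[OF G cfuns_const])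
  have "1 * G x + (- G \<sigma>) * 1 = 0" if "x \<in> msupport \<mu>" for x
  proof -
    have "reversible_cycle P (mdiff (dirac x) (dirac \<sigma>))"
      using supp that reversible_cycle_same_hotness unfolding hotness_level_def by blast
    then have "mdiff (dirac x) (dirac \<sigma>) G = 0" by (rule ann)
    then show ?thesis using G by (simp add: mdiff_def dirac_def)
  qed
  then have "\<mu> (\<lambda>x. 1 * G x + (- G \<sigma>) * 1) = 0" by (rule meas_plus_zero_on_support[OF cpt \<mu> G\<sigma>])
  moreover have "\<mu> (\<lambda>x. 1 * G x + (- G \<sigma>) * 1) = 1 * \<mu> G + (- G \<sigma>) * \<mu> (\<lambda>_. 1)"
    by (rule meas_linear[OF m G cfuns_const]) simp
  ultimately show "mdiff \<mu> (mscale (\<mu> (\<lambda>_. 1)) (dirac \<sigma>)) G = 0"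
    using G by (simp add: mdiff_def mscale_def dirac_def)
qed

definition carnot_heat :: "('a \<Rightarrow> real) \<Rightarrow> 'a \<Rightarrow> 'a \<Rightarrow> 'a::topological_space meas" where
  "carnot_heat T \<sigma>' \<sigma> = mdiff (mscale (T \<sigma>') (dirac \<sigma>')) (mscale (T \<sigma>) (dirac \<sigma>))"

lemma carnot_heat_meas: "compact (UNIV :: 'a::topological_space set) \<Longrightarrow> carnot_heat T (\<sigma>' :: 'a) \<sigma> \<in> meas"
  unfolding carnot_heat_def by (intro mdiff_meas mscale_meas dirac_meas)

lemma carnot_heat_apply: "f \<in> cfuns \<Longrightarrow> carnot_heat T \<sigma>' \<sigma> f = T \<sigma>' * f \<sigma>' - T \<sigma> * f \<sigma>"
  by (simp add: carnot_heat_def mdiff_def mscale_def dirac_def)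

lemma carnot_heat_entropy_zero:
  assumes "T \<in> cfuns" "\<And>x. 0 < T x"
  shows "carnot_heat T \<sigma>' \<sigma> (\<lambda>x. 1 / T x) = 0"
  using carnot_heat_apply[OF cfuns_inverse[OF assms]] assms(2)[of \<sigma>] assms(2)[of \<sigma>'] by simp

lemma carnot_between_diracs:
  fixes P :: "('a::t2_space meas \<times> 'a meas) set"
  assumes cpt: "compact (UNIV :: 'a set)" and zero: "(mzero, mzero) \<in> hatP P"
    and rev: "reversible_cycle P (mdiff (mscale c' (dirac \<sigma>')) (mscale c (dirac \<sigma>)))"
    and "0 < c'" "0 < c"
  shows "carnot_between P (hotness_level P \<sigma>') (hotness_level P \<sigma>)
    (mzero, mdiff (mscale c' (dirac \<sigma>')) (mscale c (dirac \<sigma>)))"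
  unfolding carnot_between_def
proof (intro conjI exI)
  show "reversible P (mzero, mdiff (mscale c' (dirac \<sigma>')) (mscale c (dirac \<sigma>)))"
    using rev by (simp add: reversible_iff_reversible_cycle)
  show "cyclic P (mzero, mdiff (mscale c' (dirac \<sigma>')) (mscale c (dirac \<sigma>)))"
    using rev by (simp add: cyclic_def reversible_cycle_def)
  show "msupport (mscale c' (dirac \<sigma>')) \<subseteq> hotness_level P \<sigma>'"
    "msupport (mscale c (dirac \<sigma>)) \<subseteq> hotness_level P \<sigma>"
    using msupport_mscale_dirac mem_own_hotness_level[OF zero] by blast+
qed (use mscale_dirac_meas_plus[OF cpt] \<open>0 < c'\<close> \<open>0 < c\<close> in auto)

section \<open>Perturbing a Clausius-Duhem temperature scale\<close>

lemma small_multiple_below_inverse: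
  assumes cpt: "compact (UNIV :: 'a::topological_space set)"
    and T: "(T :: 'a \<Rightarrow> real) \<in> cfuns" "\<And>x. 0 < T x" and G: "G \<in> cfuns"
  obtains t where "0 < t" "\<And>x. t * G x < 1 / T x"
proof -
  obtain M where M: "\<And>x. \<bar>T x\<bar> \<le> M" using cfuns_bounded[OF cpt T(1)] by blast
  obtain B where B: "\<And>x. \<bar>G x\<bar> \<le> B" using cfuns_bounded[OF cpt G] by blast
  have "0 < M" using M[of undefined] T(2)[of undefined] by simp
  moreover have "0 \<le> B" using B[of undefined] by simp
  ultimately have pos: "0 < 1 / (2 * M * (B + 1))" by simp
  have "1 / (2 * M * (B + 1)) * G x < 1 / T x" for x
  proof -
    have "1 / (2 * M * (B + 1)) * G x \<le> 1 / (2 * M * (B + 1)) * (B + 1)"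
      using B[of x] pos by (intro mult_left_mono) auto
    also have "\<dots> = 1 / (2 * M)" using \<open>0 \<le> B\<close> by simp
    also have "\<dots> < 1 / M" using \<open>0 < M\<close> by (simp add: field_simps)
    also have "1 / M \<le> 1 / T x" using M[of x] T(2)[of x] by (simp add: frac_le)
    finally show ?thesis .
  qed
  with pos show ?thesis using that by blast
qed

lemma CD_pair_perturb:
  assumes P: "P \<subseteq> Vsp" and cd: "CD_pair P \<eta> T" and G: "G1 \<in> cfuns" "G2 \<in> cfuns"
    and valid: "\<And>dm \<nu>. (dm, \<nu>) \<in> P \<Longrightarrow> 0 \<le> dm G1 + \<nu> G2"
    and t_small: "0 < t" "\<And>x. t * G2 x < 1 / T x"
  shows "CD_pair P (\<lambda>x. \<eta> x + t * G1 x) (\<lambda>x. 1 / (1 / T x - t * G2 x))"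
proof -
  have \<eta>: "\<eta> \<in> cfuns" and T: "T \<in> cfuns" "\<And>x. 0 < T x"
    and ineq: "\<And>dm \<nu>. (dm, \<nu>) \<in> P \<Longrightarrow> \<nu> (\<lambda>x. 1 / T x) \<le> dm \<eta>"
    using cd unfolding CD_pair_def by auto
  have invT: "(\<lambda>x. 1 / T x) \<in> cfuns" by (rule cfuns_inverse[OF T])
  have D: "(\<lambda>x. 1 / T x - t * G2 x) \<in> cfuns" using cfuns_linear[OF invT G(2), of 1 "- t"] by simp
  have D_pos: "0 < 1 / T x - t * G2 x" for x using t_small(2)[of x] by simp
  show ?thesis
    unfolding CD_pair_def
  proof (intro conjI allI ballI)
    show "(\<lambda>x. \<eta> x + t * G1 x) \<in> cfuns" using cfuns_linear[OF \<eta> G(1), of 1 t] by simp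
    show "(\<lambda>x. 1 / (1 / T x - t * G2 x)) \<in> cfuns" by (rule cfuns_inverse[OF D D_pos])
    show "0 < 1 / (1 / T x - t * G2 x)" for x using D_pos[of x] by simp
    fix u assume "u \<in> P"
    then obtain dm \<nu> where u: "u = (dm, \<nu>)" "(dm, \<nu>) \<in> P" by (cases u) auto
    then have m: "dm \<in> meas" "\<nu> \<in> meas" using P by (auto simp: mem_Vsp_iff)
    have "dm (\<lambda>x. \<eta> x + t * G1 x) = 1 * dm \<eta> + t * dm G1"
      by (rule meas_linear[OF m(1) \<eta> G(1)]) simp
    moreover have "\<nu> (\<lambda>x. 1 / T x - t * G2 x) = 1 * \<nu> (\<lambda>x. 1 / T x) + (- t) * \<nu> G2"
      by (rule meas_linear[OF m(2) invT G(2)]) simp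
    moreover have "0 \<le> t * (dm G1 + \<nu> G2)" using t_small(1) valid[OF u(2)] by simp
    ultimately show "case u of (dm, q) \<Rightarrow>
        q (\<lambda>x. 1 / (1 / (1 / T x - t * G2 x))) \<le> dm (\<lambda>x. \<eta> x + t * G1 x)"
      using ineq[OF u(2)] u(1) by (simp add: algebra_simps)
  qed
qed

section \<open>The four conditions\<close>

definition CD_temp_unique :: "('a::topological_space meas \<times> 'a meas) set \<Rightarrow> ('a \<Rightarrow> real) \<Rightarrow> bool" where
  "CD_temp_unique P T \<longleftrightarrow> (\<forall>T'. CD_temp P T' \<longrightarrow> (\<exists>c>0. \<forall>x. T' x = c * T x))"

definition zero_entropy_cycles_attainable ::
    "('a::topological_space meas \<times> 'a meas) set \<Rightarrow> ('a \<Rightarrow> real) \<Rightarrow> bool" where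
  "zero_entropy_cycles_attainable P T \<longleftrightarrow> (\<forall>q\<in>meas. q (\<lambda>x. 1 / T x) = 0 \<longrightarrow> (mzero, q) \<in> hatP P)"

definition carnot_between_levels :: "('a::topological_space meas \<times> 'a meas) set \<Rightarrow> bool" where
  "carnot_between_levels P \<longleftrightarrow>
    (\<forall>h'\<in>hotness_levels P. \<forall>h\<in>hotness_levels P. \<exists>u. carnot_between P h' h u)"

definition carnot_between_states :: "('a::topological_space meas \<times> 'a meas) set \<Rightarrow> ('a \<Rightarrow> real) \<Rightarrow> bool" where
  "carnot_between_states P T \<longleftrightarrow> (\<forall>\<sigma>' \<sigma>. \<exists>c' c. 0 < c' \<and> 0 < c \<and> c' / c = T \<sigma>' / T \<sigma> \<and>
     carnot P (mzero, mdiff (mscale c' (dirac \<sigma>')) (mscale c (dirac \<sigma>))))"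

lemma reversible_cycle_if_zero_entropy:
  assumes "zero_entropy_cycles_attainable P T" "q \<in> meas" "q (\<lambda>x. 1 / T x) = 0"
  shows "reversible_cycle P q"
  using assms mscale_meas[OF assms(2), of "-1"]
  unfolding zero_entropy_cycles_attainable_def reversible_cycle_def by (simp add: mscale_def)

lemma zero_entropy_cycles_if_CD_temp_unique:
  fixes P :: "('a::topological_space meas \<times> 'a meas) set"
  assumes cpt: "compact (UNIV :: 'a set)" and th: "thermo_theory P" and zero: "(mzero, mzero) \<in> hatP P"
    and cd: "CD_pair P \<eta> T" and unique: "CD_temp_unique P T"
  shows "zero_entropy_cycles_attainable P T"
  unfolding zero_entropy_cycles_attainable_def
proof (intro ballI impI)
  fix q :: "'a meas" assume q: "q \<in> meas" "q (\<lambda>x. 1 / T x) = 0"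
  have T: "T \<in> cfuns" "\<And>x. 0 < T x" using cd unfolding CD_pair_def by auto
  show "(mzero, q) \<in> hatP P"
  proof (rule hatP_if_dual_cone[of "hatP P"])
    show "(mzero, q) \<in> Vsp" using q(1) by simp
    fix G1 G2 assume G: "G1 \<in> cfuns" "G2 \<in> cfuns" and valid: "\<forall>u\<in>hatP P. 0 \<le> fst u G1 + snd u G2"
    obtain t where t_small: "0 < t" "\<And>x. t * G2 x < 1 / T x"
      using small_multiple_below_inverse[OF cpt T G(2)] by blast
    have P: "P \<subseteq> Vsp" using th by (simp add: thermo_theory_def)
    moreover have "0 \<le> dm G1 + \<nu> G2" if "(dm, \<nu>) \<in> P" for dm \<nu>
      using bspec[OF valid subsetD[OF subset_hatP[OF P] that]] by simp
    ultimately have "CD_temp P (\<lambda>x. 1 / (1 / T x - t * G2 x))"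
      unfolding CD_temp_def using CD_pair_perturb[OF _ cd G _ t_small] by blast
    then obtain c where c: "0 < c" "\<And>x. 1 / (1 / T x - t * G2 x) = c * T x"
      using unique unfolding CD_temp_unique_def by blast
    \<comment> \<open>Uniqueness of the scale forces \<open>G2\<close> to be a multiple of \<open>1/T\<close>.\<close>
    have "G2 x = (1 - 1 / c) / t * (1 / T x)" for x
    proof -
      have "1 / T x - t * G2 x = 1 / (c * T x)" using arg_cong[OF c(2)[of x], of "\<lambda>y. 1 / y"] by simp
      then have "t * G2 x = 1 / T x - 1 / (c * T x)" by linarith
      also have "\<dots> = (1 - 1 / c) * (1 / T x)" by (simp add: diff_divide_distrib)
      finally have tG2: "t * G2 x = (1 - 1 / c) * (1 / T x)" .
      have "G2 x = (t * G2 x) / t" using t_small(1) by simp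
      also have "\<dots> = (1 - 1 / c) / t * (1 / T x)" by (simp only: tG2) simp
      finally show ?thesis .
    qed
    then have "q G2 = (1 - 1 / c) / t * q (\<lambda>x. 1 / T x)" by (rule meas_scale[OF q(1) cfuns_inverse[OF T]])
    then show "0 \<le> fst (mzero, q) G1 + snd (mzero, q) G2" using q(2) by (simp add: mzero_def)
  qed (use hatP_padd[OF th zero] hatP_pscale[OF zero] zero in auto)
qed

lemma CD_temp_unique_if_zero_entropy_cycles:
  fixes P :: "('a::topological_space meas \<times> 'a meas) set"
  assumes cpt: "compact (UNIV :: 'a set)" and cd: "CD_pair P \<eta> T"
    and cycles: "zero_entropy_cycles_attainable P T"
  shows "CD_temp_unique P T"
  unfolding CD_temp_unique_def
proof (intro allI impI)
  fix T' assume "CD_temp P T'"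
  then obtain \<eta>' where cd': "CD_pair P \<eta>' T'" unfolding CD_temp_def by blast
  have T: "T \<in> cfuns" "\<And>x. 0 < T x" and T': "T' \<in> cfuns" "\<And>x. 0 < T' x"
    using cd cd' unfolding CD_pair_def by auto
  fix \<sigma>\<^sub>0 :: 'a
  \<comment> \<open>The Carnot cycle between \<open>x\<close> and \<open>\<sigma>\<^sub>0\<close> built from \<open>T\<close> has zero entropy for \<open>T'\<close> as well.\<close>
  have ratio: "T x / T' x = T \<sigma>\<^sub>0 / T' \<sigma>\<^sub>0" for x
  proof -
    have "reversible_cycle P (carnot_heat T x \<sigma>\<^sub>0)"
      by (rule reversible_cycle_if_zero_entropy[OF cycles carnot_heat_meas[OF cpt] carnot_heat_entropy_zero[OF T]])
    then have "carnot_heat T x \<sigma>\<^sub>0 (\<lambda>y. 1 / T' y) = 0" by (rule reversible_cycle_entropy_zero[OF cd'])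
    then show ?thesis using carnot_heat_apply[OF cfuns_inverse[OF T']] by simp
  qed
  have "T' x = T' \<sigma>\<^sub>0 / T \<sigma>\<^sub>0 * T x" for x
    using ratio[of x] T(2)[of x] T'(2)[of x] T(2)[of \<sigma>\<^sub>0] T'(2)[of \<sigma>\<^sub>0] by (simp add: field_simps)
  moreover have "0 < T' \<sigma>\<^sub>0 / T \<sigma>\<^sub>0" using T(2) T'(2) by simp
  ultimately show "\<exists>c>0. \<forall>x. T' x = c * T x" by blast
qed

lemma carnot_between_levels_if_zero_entropy_cycles:
  fixes P :: "('a::t2_space meas \<times> 'a meas) set"
  assumes cpt: "compact (UNIV :: 'a set)" and zero: "(mzero, mzero) \<in> hatP P"
    and cd: "CD_pair P \<eta> T" and cycles: "zero_entropy_cycles_attainable P T"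
  shows "carnot_between_levels P"
  unfolding carnot_between_levels_def hotness_levels_eq
proof (intro ballI)
  fix h' h assume "h' \<in> range (hotness_level P)" "h \<in> range (hotness_level P)"
  then obtain \<sigma>' \<sigma> where h: "h' = hotness_level P \<sigma>'" "h = hotness_level P \<sigma>" by blast
  have T: "T \<in> cfuns" "\<And>x. 0 < T x" using cd unfolding CD_pair_def by auto
  have "reversible_cycle P (carnot_heat T \<sigma>' \<sigma>)"
    by (rule reversible_cycle_if_zero_entropy[OF cycles carnot_heat_meas[OF cpt] carnot_heat_entropy_zero[OF T]])
  then show "\<exists>u. carnot_between P h' h u"
    unfolding h carnot_heat_def using carnot_between_diracs[OF cpt zero _ T(2) T(2)] by blast
qed

lemma carnot_between_states_if_levels:
  fixes P :: "('a::t2_space meas \<times> 'a meas) set"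
  assumes cpt: "compact (UNIV :: 'a set)" and th: "thermo_theory P" and zero: "(mzero, mzero) \<in> hatP P"
    and cd: "CD_pair P \<eta> T" and levels: "carnot_between_levels P"
  shows "carnot_between_states P T"
  unfolding carnot_between_states_def
proof (intro allI)
  fix \<sigma>' \<sigma> :: 'a
  obtain u where "carnot_between P (hotness_level P \<sigma>') (hotness_level P \<sigma>) u"
    using levels unfolding carnot_between_levels_def hotness_levels_eq by blast
  then obtain \<mu>' \<mu> where u: "reversible P u" "cyclic P u" "snd u = mdiff \<mu>' \<mu>"
    and \<mu>: "\<mu>' \<in> meas_plus" "\<mu> \<in> meas_plus" "\<mu>' \<noteq> mzero" "\<mu> \<noteq> mzero"
    and supp: "msupport \<mu>' \<subseteq> hotness_level P \<sigma>'" "msupport \<mu> \<subseteq> hotness_level P \<sigma>"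
    unfolding carnot_between_def by blast
  then have "u = (mzero, mdiff \<mu>' \<mu>)" unfolding cyclic_def by (cases u) simp
  with u(1) have rev: "reversible_cycle P (mdiff \<mu>' \<mu>)" by (simp add: reversible_iff_reversible_cycle)
  define c' where "c' = \<mu>' (\<lambda>_. 1)"
  define c where "c = \<mu> (\<lambda>_. 1)"
  have c: "0 < c'" "0 < c" unfolding c'_def c_def using meas_plus_total_pos[OF cpt] \<mu> by auto
  define Q where "Q = mdiff (mscale c' (dirac \<sigma>')) (mscale c (dirac \<sigma>))"
  \<comment> \<open>Collapsing each reservoir to a single state keeps the cycle reversible.\<close>
  have Q_eq: "Q = madd (madd (mdiff \<mu>' \<mu>) (mscale (-1) (mdiff \<mu>' (mscale c' (dirac \<sigma>')))))
      (mdiff \<mu> (mscale c (dirac \<sigma>)))"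
    unfolding Q_def by (simp add: fun_eq_iff madd_def mdiff_def mscale_def)
  have "reversible_cycle P (mdiff \<mu>' (mscale c' (dirac \<sigma>')))"
    "reversible_cycle P (mdiff \<mu> (mscale c (dirac \<sigma>)))"
    unfolding c'_def c_def using reversible_cycle_collapse_to_state[OF cpt th zero] \<mu> supp by blast+
  then have rev_Q: "reversible_cycle P Q"
    unfolding Q_eq using rev reversible_cycle_madd[OF th zero] reversible_cycle_mscale[OF zero] by blast
  have T: "\<And>x. 0 < T x" "(\<lambda>x. 1 / T x) \<in> cfuns"
    using cd cfuns_inverse unfolding CD_pair_def by auto
  have "c' / T \<sigma>' - c / T \<sigma> = 0"
    using reversible_cycle_entropy_zero[OF cd rev_Q] T(2) unfolding Q_def
    by (simp add: mdiff_def mscale_def dirac_def)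
  then have "c' / c = T \<sigma>' / T \<sigma>" using c T(1)[of \<sigma>] T(1)[of \<sigma>'] by (simp add: field_simps)
  moreover have "carnot P (mzero, Q)"
    unfolding carnot_def hotness_levels_eq Q_def
    using carnot_between_diracs[OF cpt zero rev_Q[unfolded Q_def] c] by blast
  ultimately show "\<exists>c' c. 0 < c' \<and> 0 < c \<and> c' / c = T \<sigma>' / T \<sigma> \<and>
      carnot P (mzero, mdiff (mscale c' (dirac \<sigma>')) (mscale c (dirac \<sigma>)))"
    using c unfolding Q_def by blast
qed

lemma zero_entropy_cycles_if_carnot_between_states:
  fixes P :: "('a::t2_space meas \<times> 'a meas) set"
  assumes th: "thermo_theory P" and zero: "(mzero, mzero) \<in> hatP P"
    and cd: "CD_pair P \<eta> T" and states: "carnot_between_states P T"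
  shows "zero_entropy_cycles_attainable P T"
  unfolding zero_entropy_cycles_attainable_def
proof (intro ballI impI)
  fix q :: "'a meas" assume q: "q \<in> meas" "q (\<lambda>x. 1 / T x) = 0"
  have T: "\<And>x. 0 < T x" "(\<lambda>x. 1 / T x) \<in> cfuns"
    using cd cfuns_inverse unfolding CD_pair_def by auto
  fix \<sigma>\<^sub>0 :: 'a
  have rev: "reversible_cycle P (carnot_heat T x \<sigma>\<^sub>0)" for x
  proof -
    obtain c' c where c: "0 < c'" "0 < c" "c' / c = T x / T \<sigma>\<^sub>0"
      and "carnot P (mzero, mdiff (mscale c' (dirac x)) (mscale c (dirac \<sigma>\<^sub>0)))"
      using states unfolding carnot_between_states_def by blast
    then have "reversible_cycle P (mdiff (mscale c' (dirac x)) (mscale c (dirac \<sigma>\<^sub>0)))"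
      unfolding carnot_def carnot_between_def by (auto simp: reversible_iff_reversible_cycle)
    then have "reversible_cycle P (mscale (T \<sigma>\<^sub>0 / c) (mdiff (mscale c' (dirac x)) (mscale c (dirac \<sigma>\<^sub>0))))"
      by (rule reversible_cycle_mscale[OF zero])
    moreover have "c' = c * T x / T \<sigma>\<^sub>0" using c T(1)[of \<sigma>\<^sub>0] by (simp add: field_simps)
    then have "mscale (T \<sigma>\<^sub>0 / c) (mdiff (mscale c' (dirac x)) (mscale c (dirac \<sigma>\<^sub>0))) = carnot_heat T x \<sigma>\<^sub>0"
      using c(2) T(1)[of \<sigma>\<^sub>0] by (simp add: fun_eq_iff carnot_heat_def mscale_def mdiff_def field_simps)
    ultimately show ?thesis by simp
  qed
  show "(mzero, q) \<in> hatP P"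
  proof -
    \<comment> \<open>A function annihilating every Carnot cycle \<open>T x \<delta>\<^sub>x - T \<sigma>\<^sub>0 \<delta>\<^sub>\<sigma>\<^sub>0\<close> is a multiple of \<open>1/T\<close>.\<close>
    have "q G = 0" if G: "G \<in> cfuns" and ann: "\<And>\<nu>. reversible_cycle P \<nu> \<Longrightarrow> \<nu> G = 0" for G
    proof -
      have "G x = T \<sigma>\<^sub>0 * G \<sigma>\<^sub>0 * (1 / T x)" for x
        using ann[OF rev[of x]] carnot_heat_apply[OF G] T(1)[of x] by (simp add: field_simps)
      then have "q G = T \<sigma>\<^sub>0 * G \<sigma>\<^sub>0 * q (\<lambda>x. 1 / T x)" by (rule meas_scale[OF q(1) T(2)])
      then show ?thesis using q(2) by simp
    qed
    then have "reversible_cycle P q" by (rule reversible_cycle_if_annihilated[OF th zero q(1)])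
    then show ?thesis unfolding reversible_cycle_def ..
  qed
qed

theorem theorem4p1:
  fixes P :: "('a::t2_space meas \<times> 'a meas) set" and T :: "'a \<Rightarrow> real"
  assumes "compact (UNIV :: 'a set)"
    and "kelvin_planck P"
    and "CD_temp P T"
  shows "((\<forall>T'. CD_temp P T' \<longrightarrow> (\<exists>c>0. \<forall>x. T' x = c * T x))
          \<longleftrightarrow> (\<forall>q\<in>meas. q (\<lambda>x. 1 / T x) = 0 \<longrightarrow> (mzero, q) \<in> hatP P))
       \<and> ((\<forall>q\<in>meas. q (\<lambda>x. 1 / T x) = 0 \<longrightarrow> (mzero, q) \<in> hatP P)
          \<longleftrightarrow> (\<forall>h'\<in>hotness_levels P. \<forall>h\<in>hotness_levels P. \<exists>u. carnot_between P h' h u))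
       \<and> ((\<forall>h'\<in>hotness_levels P. \<forall>h\<in>hotness_levels P. \<exists>u. carnot_between P h' h u)
          \<longleftrightarrow> (\<forall>\<sigma>' \<sigma>. \<exists>c' c. 0 < c' \<and> 0 < c \<and> c' / c = T \<sigma>' / T \<sigma> \<and>
                 carnot P (mzero, mdiff (mscale c' (dirac \<sigma>')) (mscale c (dirac \<sigma>)))))"
proof -
  note cpt = assms(1)
  have th: "thermo_theory P" and zero: "(mzero, mzero) \<in> hatP P"
    using assms(2) unfolding kelvin_planck_def by blast+
  obtain \<eta> where cd: "CD_pair P \<eta> T" using assms(3) unfolding CD_temp_def by blast
  have "CD_temp_unique P T \<longleftrightarrow> zero_entropy_cycles_attainable P T"
    using zero_entropy_cycles_if_CD_temp_unique[OF cpt th zero cd]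
      CD_temp_unique_if_zero_entropy_cycles[OF cpt cd] by blast
  moreover have "zero_entropy_cycles_attainable P T \<Longrightarrow> carnot_between_levels P"
    by (rule carnot_between_levels_if_zero_entropy_cycles[OF cpt zero cd])
  moreover have "carnot_between_levels P \<Longrightarrow> carnot_between_states P T"
    by (rule carnot_between_states_if_levels[OF cpt th zero cd])
  moreover have "carnot_between_states P T \<Longrightarrow> zero_entropy_cycles_attainable P T"
    by (rule zero_entropy_cycles_if_carnot_between_states[OF th zero cd])
  ultimately show ?thesis
    unfolding CD_temp_unique_def zero_entropy_cycles_attainable_def carnot_between_levels_def
      carnot_between_states_def by blast
qed

end
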